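(* Let $(\mathcal A,u)$ be either $(k[\Delta_{\mathrm{inj}}],u_\Delta)$ or $(k[\square_{\mathrm{inj}}],u_\square)$, and write $\mathbf n$ for $[n]$ in the first case and $\square_n$ in the second. The representable left $\mathcal A$-modules $P_n:=\mathcal A(\mathbf n,-)$, $n\ge0$, with differentials $P_n\to P_{n-1}$ given by precomposition with $u(d_n)\colon\mathbf{n-1}\to\mathbf n$, form an augmented projective resolution \[\cdots\to P_2\to P_1\to P_0\xrightarrow{\varepsilon}k_\bullet\to0\] in $\mathrm{lmod}(\mathcal A)$, where $\varepsilon$ sends every basis morphism to $1\in k$.
   Context: $k$ is a field; $k[\mathcal C]$ is the $k$-linearization of a small category $\mathcal C$. Left modules over a $k$-linear category $\mathcal A$ are $k$-linear functors $\mathcal A\to\mathrm{Vect}_k$. $\Delta_{\mathrm{inj}}$: objects $[n]=\{0<\dots<n\}$, $n\ge0$, injective order-preserving maps; $\delta^i\colon[n-1]\to[n]$ omits $i$. $\square_{\mathrm{inj}}$: objects $\square_n=\{0,1\}^n$, $n\ge0$, morphisms the composites of coface maps $\delta_i^\varepsilon\colon\square_{n-1}\to\square_n$ ($\varepsilon\in\{0,1\}$, $1\le i\le n$) inserting $\varepsilon$ as $i$-th coordinate. $\Omega$ is the $k$-linear category with objects $[n]$, $n\ge0$, generated by $d_n\colon[n-1]\to[n]$, $n\ge1$, with relations $d_{n+1}d_n=0$. $u_\Delta\colon\Omega\to k[\Delta_{\mathrm{inj}}]$ is $[n]\mapsto[n]$, $d_n\mapsto\sum_{i=0}^n(-1)^i\delta^i$;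 $u_\square\colon\Omega\to k[\square_{\mathrm{inj}}]$ is $[n]\mapsto\square_n$, $d_n\mapsto\sum_{i=1}^n(-1)^{i-1}(\delta_i^1-\delta_i^0)$. $k_\bullet$ is the constant left $\mathcal A$-module with value $k$ at every object and every morphism acting by the identity. *)

theory Defs
  imports "HOL-Library.FuncSet"
begin

definition vzero :: "'x \<Rightarrow> 'k::field" where "vzero = (\<lambda>_. 0)"
definition vadd :: "('x \<Rightarrow> 'k::field) \<Rightarrow> ('x \<Rightarrow> 'k) \<Rightarrow> ('x \<Rightarrow> 'k)"
  where "vadd v w = (\<lambda>x. v x + w x)"
definition vscale :: "'k::field \<Rightarrow> ('x \<Rightarrow> 'k) \<Rightarrow> ('x \<Rightarrow> 'k)"
  where "vscale a v = (\<lambda>x. a * v x)"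

definition ksubspace :: "('x \<Rightarrow> 'k::field) set \<Rightarrow> bool" where
  "ksubspace S \<longleftrightarrow> vzero \<in> S \<and> (\<forall>v\<in>S. \<forall>w\<in>S. vadd v w \<in> S) \<and> (\<forall>a. \<forall>v\<in>S. vscale a v \<in> S)"

definition klinear :: "('x \<Rightarrow> 'k::field) set \<Rightarrow> (('x \<Rightarrow> 'k) \<Rightarrow> ('y \<Rightarrow> 'k)) \<Rightarrow> bool" where
  "klinear S f \<longleftrightarrow> (\<forall>v\<in>S. \<forall>w\<in>S. f (vadd v w) = vadd (f v) (f w)) \<and>
                    (\<forall>a. \<forall>v\<in>S. f (vscale a v) = vscale a (f v))"

text \<open>The category is given by object carriers obj n, hom-sets Hom n m of
  extensional functions on obj n, composition = FuncSet compose, identity = restricted id.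
  A k-linear functor k[C] -> Vect_k is the same as a functor C -> Vect_k; a module is
  given by subspaces M m of a function space 'x => k and actions act n m phi.\<close>

definition lmod :: "(nat \<Rightarrow> 'a set) \<Rightarrow> (nat \<Rightarrow> nat \<Rightarrow> ('a \<Rightarrow> 'a) set) \<Rightarrow>
    (nat \<Rightarrow> ('x \<Rightarrow> 'k::field) set) \<Rightarrow> (nat \<Rightarrow> nat \<Rightarrow> ('a \<Rightarrow> 'a) \<Rightarrow> ('x \<Rightarrow> 'k) \<Rightarrow> ('x \<Rightarrow> 'k)) \<Rightarrow> bool" where
  "lmod obj Hom M act \<longleftrightarrow>
     (\<forall>m. ksubspace (M m)) \<and>
     (\<forall>n m \<phi>. \<phi> \<in> Hom n m \<longrightarrow> (\<forall>v\<in>M n. act n m \<phi> v \<in> M m) \<and> klinear (M n) (act n m \<phi>)) \<and>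
     (\<forall>n. \<forall>v\<in>M n. act n n (\<lambda>x\<in>obj n. x) v = v) \<and>
     (\<forall>n m p \<phi> \<psi>. \<phi> \<in> Hom n m \<longrightarrow> \<psi> \<in> Hom m p \<longrightarrow>
        (\<forall>v\<in>M n. act n p (compose (obj n) \<psi> \<phi>) v = act m p \<psi> (act n m \<phi> v)))"

definition lmod_hom :: "(nat \<Rightarrow> nat \<Rightarrow> ('a \<Rightarrow> 'a) set) \<Rightarrow>
    (nat \<Rightarrow> ('x \<Rightarrow> 'k::field) set) \<Rightarrow> (nat \<Rightarrow> nat \<Rightarrow> ('a \<Rightarrow> 'a) \<Rightarrow> ('x \<Rightarrow> 'k) \<Rightarrow> ('x \<Rightarrow> 'k)) \<Rightarrow>
    (nat \<Rightarrow> ('y \<Rightarrow> 'k) set) \<Rightarrow> (nat \<Rightarrow> nat \<Rightarrow> ('a \<Rightarrow> 'a) \<Rightarrow> ('y \<Rightarrow> 'k) \<Rightarrow> ('y \<Rightarrow> 'k)) \<Rightarrow>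
    (nat \<Rightarrow> ('x \<Rightarrow> 'k) \<Rightarrow> ('y \<Rightarrow> 'k)) \<Rightarrow> bool" where
  "lmod_hom Hom M actM N actN f \<longleftrightarrow>
     (\<forall>m. \<forall>v\<in>M m. f m v \<in> N m) \<and> (\<forall>m. klinear (M m) (f m)) \<and>
     (\<forall>n m \<phi>. \<phi> \<in> Hom n m \<longrightarrow> (\<forall>v\<in>M n. f m (actM n m \<phi> v) = actN n m \<phi> (f n v)))"

text \<open>Test modules live in 'x => k and
  'y => k for arbitrary types 'x, 'y (every vector space embeds in such a space).\<close>

definition projective_lmod :: "'x itself \<Rightarrow> 'y itself \<Rightarrow> (nat \<Rightarrow> 'a set) \<Rightarrow> (nat \<Rightarrow> nat \<Rightarrow> ('a \<Rightarrow> 'a) set) \<Rightarrow>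
    (nat \<Rightarrow> ('z \<Rightarrow> 'k::field) set) \<Rightarrow> (nat \<Rightarrow> nat \<Rightarrow> ('a \<Rightarrow> 'a) \<Rightarrow> ('z \<Rightarrow> 'k) \<Rightarrow> ('z \<Rightarrow> 'k)) \<Rightarrow> bool" where
  "projective_lmod _ _ obj Hom P actP \<longleftrightarrow>
     (\<forall>(M :: nat \<Rightarrow> ('x \<Rightarrow> 'k) set) actM (N :: nat \<Rightarrow> ('y \<Rightarrow> 'k) set) actN f g.
        lmod obj Hom M actM \<and> lmod obj Hom N actN \<and> lmod_hom Hom M actM N actN f \<and>
        (\<forall>m. f m ` M m = N m) \<and> lmod_hom Hom P actP N actN g \<longrightarrow>
        (\<exists>h. lmod_hom Hom P actP M actM h \<and> (\<forall>m. \<forall>v\<in>P m. f m (h m v) = g m v)))"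

text \<open>Elements of k[Hom(n,m)]: finitely supported k-valued functions on Hom n m.\<close>
definition Pmod :: "(nat \<Rightarrow> nat \<Rightarrow> ('a \<Rightarrow> 'a) set) \<Rightarrow> nat \<Rightarrow> nat \<Rightarrow> (('a \<Rightarrow> 'a) \<Rightarrow> 'k::field) set" where
  "Pmod Hom n m = {c. finite {\<phi>. c \<phi> \<noteq> 0} \<and> (\<forall>\<phi>. c \<phi> \<noteq> 0 \<longrightarrow> \<phi> \<in> Hom n m)}"

definition actP :: "(nat \<Rightarrow> 'a set) \<Rightarrow> (nat \<Rightarrow> nat \<Rightarrow> ('a \<Rightarrow> 'a) set) \<Rightarrow> nat \<Rightarrow>
    nat \<Rightarrow> nat \<Rightarrow> ('a \<Rightarrow> 'a) \<Rightarrow> (('a \<Rightarrow> 'a) \<Rightarrow> 'k::field) \<Rightarrow> (('a \<Rightarrow> 'a) \<Rightarrow> 'k)" where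
  "actP obj Hom n p q \<alpha> c = (\<lambda>\<chi>. \<Sum>\<phi>\<in>Hom n p. if compose (obj n) \<alpha> \<phi> = \<chi> then c \<phi> else 0)"

text \<open>Differential P_n(m) -> P_{n-1}(m), n >= 1: precomposition with the formal
  combination ud n = u(d_n) in k[Hom(n-1,n)].\<close>
definition dP :: "(nat \<Rightarrow> 'a set) \<Rightarrow> (nat \<Rightarrow> nat \<Rightarrow> ('a \<Rightarrow> 'a) set) \<Rightarrow>
    (nat \<Rightarrow> ('a \<Rightarrow> 'a) \<Rightarrow> 'k::field) \<Rightarrow> nat \<Rightarrow> nat \<Rightarrow> (('a \<Rightarrow> 'a) \<Rightarrow> 'k) \<Rightarrow> (('a \<Rightarrow> 'a) \<Rightarrow> 'k)" where
  "dP obj Hom ud n m c = (\<lambda>\<psi>. \<Sum>\<phi>\<in>Hom n m. \<Sum>\<theta>\<in>Hom (n - 1) n.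
       if compose (obj (n - 1)) \<phi> \<theta> = \<psi> then c \<phi> * ud n \<theta> else 0)"

definition aug :: "(nat \<Rightarrow> nat \<Rightarrow> ('a \<Rightarrow> 'a) set) \<Rightarrow> nat \<Rightarrow> (('a \<Rightarrow> 'a) \<Rightarrow> 'k::field) \<Rightarrow> 'k" where
  "aug Hom m c = (\<Sum>\<phi>\<in>Hom 0 m. c \<phi>)"

definition proj_resolution :: "'x itself \<Rightarrow> 'y itself \<Rightarrow> (nat \<Rightarrow> 'a set) \<Rightarrow>
    (nat \<Rightarrow> nat \<Rightarrow> ('a \<Rightarrow> 'a) set) \<Rightarrow> (nat \<Rightarrow> ('a \<Rightarrow> 'a) \<Rightarrow> 'k::field) \<Rightarrow> bool" where
  "proj_resolution tx ty obj Hom ud \<longleftrightarrow>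
     (\<forall>n. lmod obj Hom (Pmod Hom n :: nat \<Rightarrow> (('a \<Rightarrow> 'a) \<Rightarrow> 'k) set) (actP obj Hom n)) \<and>
     (\<forall>n. projective_lmod tx ty obj Hom (Pmod Hom n :: nat \<Rightarrow> (('a \<Rightarrow> 'a) \<Rightarrow> 'k) set) (actP obj Hom n)) \<and>
     (\<forall>n. n \<ge> 1 \<longrightarrow> lmod_hom Hom (Pmod Hom n :: nat \<Rightarrow> (('a \<Rightarrow> 'a) \<Rightarrow> 'k) set) (actP obj Hom n)
                         (Pmod Hom (n - 1) :: nat \<Rightarrow> (('a \<Rightarrow> 'a) \<Rightarrow> 'k) set) (actP obj Hom (n - 1)) (dP obj Hom ud n)) \<and>
     (\<forall>m. klinear (Pmod Hom 0 m :: (('a \<Rightarrow> 'a) \<Rightarrow> 'k) set) (\<lambda>c (_::unit). aug Hom m c)) \<and>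
     (\<forall>p q \<alpha>. \<alpha> \<in> Hom p q \<longrightarrow> (\<forall>c\<in>(Pmod Hom 0 p :: (('a \<Rightarrow> 'a) \<Rightarrow> 'k) set). aug Hom q (actP obj Hom 0 p q \<alpha> c) = aug Hom p c)) \<and>
     (\<forall>m (a::'k). \<exists>c\<in>(Pmod Hom 0 m :: (('a \<Rightarrow> 'a) \<Rightarrow> 'k) set). aug Hom m c = a) \<and>
     (\<forall>m. \<forall>c\<in>(Pmod Hom 0 m :: (('a \<Rightarrow> 'a) \<Rightarrow> 'k) set). aug Hom m c = 0 \<longleftrightarrow> (\<exists>b\<in>(Pmod Hom 1 m :: (('a \<Rightarrow> 'a) \<Rightarrow> 'k) set). dP obj Hom ud 1 m b = c)) \<and>
     (\<forall>n m. n \<ge> 1 \<longrightarrow> (\<forall>c\<in>(Pmod Hom n m :: (('a \<Rightarrow> 'a) \<Rightarrow> 'k) set).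
         dP obj Hom ud n m c = (\<lambda>_. 0) \<longleftrightarrow> (\<exists>b\<in>(Pmod Hom (Suc n) m :: (('a \<Rightarrow> 'a) \<Rightarrow> 'k) set). dP obj Hom ud (Suc n) m b = c)))"

definition obj_D :: "nat \<Rightarrow> nat set" where "obj_D n = {0..n}"

definition Hom_D :: "nat \<Rightarrow> nat \<Rightarrow> (nat \<Rightarrow> nat) set" where
  "Hom_D n m = {\<phi> \<in> PiE {0..n} (\<lambda>_. {0..m}). strict_mono_on {0..n} \<phi>}"

definition coface_D :: "nat \<Rightarrow> nat \<Rightarrow> (nat \<Rightarrow> nat)" where
  "coface_D n i = (\<lambda>j\<in>{0..n - 1}. if j < i then j else j + 1)"

definition ud_D :: "nat \<Rightarrow> (nat \<Rightarrow> nat) \<Rightarrow> 'k::field" where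
  "ud_D n \<theta> = (\<Sum>i\<in>{0..n}. if \<theta> = coface_D n i then (-1) ^ i else 0)"

definition obj_S :: "nat \<Rightarrow> bool list set" where "obj_S n = {x. length x = n}"

text \<open>coface delta_i^e : square_{n-1} -> square_n inserting e as i-th coordinate (1 <= i <= n)\<close>
definition coface_S :: "nat \<Rightarrow> nat \<Rightarrow> bool \<Rightarrow> (bool list \<Rightarrow> bool list)" where
  "coface_S n i e = (\<lambda>x\<in>obj_S (n - 1). take (i - 1) x @ e # drop (i - 1) x)"

inductive sq_mor :: "nat \<Rightarrow> nat \<Rightarrow> (bool list \<Rightarrow> bool list) \<Rightarrow> bool" where
  sq_id: "sq_mor n n (\<lambda>x\<in>obj_S n. x)"
| sq_step: "sq_mor n m \<phi> \<Longrightarrow> 1 \<le> i \<Longrightarrow> i \<le> Suc m \<Longrightarrow>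
            sq_mor n (Suc m) (compose (obj_S n) (coface_S (Suc m) i e) \<phi>)"

definition Hom_S :: "nat \<Rightarrow> nat \<Rightarrow> (bool list \<Rightarrow> bool list) set" where
  "Hom_S n m = {\<phi>. sq_mor n m \<phi>}"

definition ud_S :: "nat \<Rightarrow> (bool list \<Rightarrow> bool list) \<Rightarrow> 'k::field" where
  "ud_S n \<theta> = (\<Sum>i\<in>{1..n}. (-1) ^ (i - 1) *
      ((if \<theta> = coface_S n i True then 1 else 0) - (if \<theta> = coface_S n i False then 1 else 0)))"

end

theory Submission
  imports Defs "HOL-Library.Function_Algebras"
begin

text \<open>Evaluated at an object \<open>m\<close>, the augmented complex \<open>P\<^sub>\<bullet>(m) \<rightarrow> k\<close> is contractible.
  A contracting homotopy \<open>h\<close> is defined on basis morphisms.  For \<open>\<Delta>\<^sub>i\<^sub>n\<^sub>j\<close>, \<open>h\<close> sends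
  \<open>\<phi> : [n] \<rightarrow> [m]\<close> with \<open>0 \<notin> im \<phi>\<close> to the cone \<open>(0, \<phi> 0, \<dots>, \<phi> n)\<close> and every other \<open>\<phi>\<close>
  to \<open>0\<close>.  For \<open>\<box>\<^sub>i\<^sub>n\<^sub>j\<close>, a morphism \<open>\<box>\<^sub>n \<rightarrow> \<box>\<^sub>m\<close> is a word of length \<open>m\<close> in
  \<open>0, 1, *\<close> with \<open>n\<close> stars, and \<open>h\<close> of a word is the sum, over the letters \<open>1\<close> with no star to
  their left, of the word obtained by turning that letter into \<open>*\<close> and every letter to its
  left into \<open>0\<close>.  In both cases \<open>d h + h d = id\<close> in positive degrees and
  \<open>d h = id - \<eta> \<epsilon>\<close> in degree \<open>0\<close>, with \<open>\<eta>\<close> picking the vertex \<open>0\<close>, resp. \<open>(0, \<dots>, 0)\<close>.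
  That \<open>d d = 0\<close> comes from the cosimplicial and cubical identities, and projectivity of the
  representables is the Yoneda lemma.\<close>

definition basis_vec :: "'b \<Rightarrow> 'b \<Rightarrow> 'k::comm_ring_1" where
  "basis_vec \<phi> = (\<lambda>\<psi>. of_bool (\<psi> = \<phi>))"

definition lincomb :: "'i set \<Rightarrow> ('i \<Rightarrow> 'k) \<Rightarrow> ('i \<Rightarrow> 'b \<Rightarrow> 'k::comm_ring_1) \<Rightarrow> 'b \<Rightarrow> 'k" where
  "lincomb A a V = (\<lambda>x. \<Sum>s\<in>A. a s * V s x)"

lemma lincomb_cong: "(\<And>s. s \<in> A \<Longrightarrow> V s = W s) \<Longrightarrow> lincomb A a V = lincomb A a W"
  unfolding lincomb_def by (auto intro!: ext sum.cong)

lemma lincomb_cong_simp [cong]: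
  "A = B \<Longrightarrow> a = b \<Longrightarrow> (\<And>s. s \<in> B =simp=> V s = W s) \<Longrightarrow> lincomb A a V = lincomb B b W"
  unfolding lincomb_def simp_implies_def by (auto intro!: ext sum.cong)

lemma lincomb_add: "lincomb A a V + lincomb A a W = lincomb A a (\<lambda>s. V s + W s)"
  unfolding lincomb_def by (auto intro!: ext simp: sum.distrib algebra_simps)

lemma lincomb_diff: "lincomb A a V - lincomb A a W = lincomb A a (\<lambda>s. V s - W s)"
  unfolding lincomb_def by (auto intro!: ext simp: sum_subtractf algebra_simps)

lemma lincomb_const: "lincomb A a (\<lambda>_. v) = (\<lambda>x. (\<Sum>s\<in>A. a s) * v x)"
  unfolding lincomb_def by (simp add: sum_distrib_right)

lemma ksubspace_lincomb:
  assumes "ksubspace S" "finite A" "\<forall>s\<in>A. V s \<in> S"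
  shows "lincomb A a V \<in> S"
  using assms(2,3)
proof (induction A rule: finite_induct)
  case empty
  then show ?case using assms(1) by (simp add: lincomb_def ksubspace_def vzero_def)
next
  case (insert x F)
  have "lincomb (insert x F) a V = vadd (vscale (a x) (V x)) (lincomb F a V)"
    using insert by (auto simp: lincomb_def vadd_def vscale_def intro!: ext)
  then show ?case using insert assms(1) unfolding ksubspace_def by auto
qed

lemma klinear_lincomb:
  assumes "klinear S F" "ksubspace S" "finite A" "\<forall>s\<in>A. V s \<in> S"
  shows "F (lincomb A a V) = lincomb A a (\<lambda>s. F (V s))"
  using assms(3,4)
proof (induction A rule: finite_induct)
  case empty
  have "vzero \<in> S" using assms(2) by (simp add: ksubspace_def)
  then have "F (vscale 0 vzero) = vscale 0 (F vzero)" using assms(1) by (simp add: klinear_def)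
  moreover have "vscale 0 (vzero :: 'a \<Rightarrow> 'b) = vzero" "vscale 0 (F vzero) = vzero"
    by (auto simp: vscale_def vzero_def)
  ultimately show ?case by (simp add: lincomb_def vzero_def)
next
  case (insert x A)
  have split: "lincomb (insert x A) a V = vadd (vscale (a x) (V x)) (lincomb A a V)"
    using insert by (auto simp: lincomb_def vadd_def vscale_def intro!: ext)
  have "lincomb A a V \<in> S" using ksubspace_lincomb[OF assms(2)] insert by auto
  then have "F (lincomb (insert x A) a V) = vadd (vscale (a x) (F (V x))) (F (lincomb A a V))"
    unfolding split using assms(1,2) insert unfolding klinear_def ksubspace_def by auto
  then show ?case using insert by (auto simp: lincomb_def vadd_def vscale_def intro!: ext)
qed

definition kernel_op :: "'y set \<Rightarrow> ('x \<Rightarrow> 'y \<Rightarrow> 'k::comm_ring_1) \<Rightarrow> ('y \<Rightarrow> 'k) \<Rightarrow> 'x \<Rightarrow> 'k" where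
  "kernel_op B K c = (\<lambda>x. \<Sum>y\<in>B. K x y * c y)"

lemma kernel_op_lincomb: "kernel_op B K (lincomb A a V) = lincomb A a (\<lambda>s. kernel_op B K (V s))"
  unfolding kernel_op_def lincomb_def
  by (simp add: sum_distrib_left sum.swap[of _ B] mult.left_commute)

lemma kernel_op_basis_vec: "finite B \<Longrightarrow> y \<in> B \<Longrightarrow> kernel_op B K (basis_vec y) = (\<lambda>x. K x y)"
  by (auto simp: kernel_op_def basis_vec_def of_bool_def if_distrib cong: if_cong)

lemma kernel_op_zero: "kernel_op B K (\<lambda>_. 0) = (\<lambda>_. 0)"
  by (simp add: kernel_op_def)

lemma klinear_kernel_op: "klinear S (kernel_op B K)"
  unfolding klinear_def kernel_op_def vadd_def vscale_def
  by (simp add: algebra_simps sum.distrib sum_distrib_left)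

lemma actP_eq_kernel_op:
  "actP obj Hom n p q \<alpha> = kernel_op (Hom n p) (\<lambda>\<chi> \<phi>. of_bool (compose (obj n) \<alpha> \<phi> = \<chi>))"
  unfolding actP_def kernel_op_def by (auto intro!: ext sum.cong)

lemma dP_eq_kernel_op: "dP obj Hom ud n m = kernel_op (Hom n m)
    (\<lambda>\<psi> \<phi>. \<Sum>\<theta>\<in>Hom (n - 1) n. of_bool (compose (obj (n - 1)) \<phi> \<theta> = \<psi>) * ud n \<theta>)"
  unfolding dP_def kernel_op_def
  by (auto intro!: ext sum.cong simp: sum_distrib_right sum_distrib_left of_bool_def)

text \<open>The cancellation behind \<open>d d = 0\<close>: the terms \<open>(i, j)\<close> with \<open>i \<le> j\<close> and \<open>(j + 1, i)\<close>
  cancel in pairs, by the identity \<open>\<delta>\<^sup>i \<delta>\<^sup>j = \<delta>\<^sup>j\<^sup>+\<^sup>1 \<delta>\<^sup>i\<close> (\<open>i \<le> j\<close>) and its cubical analogue.\<close>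

lemma double_sum_cancel_pairs:
  fixes f :: "nat \<Rightarrow> nat \<Rightarrow> 'g::ab_group_add"
  assumes "\<And>i j. a \<le> i \<Longrightarrow> i \<le> j \<Longrightarrow> j \<le> N \<Longrightarrow> f i j = - f (Suc j) i"
  shows "(\<Sum>i=a..Suc N. \<Sum>j=a..N. f i j) = 0"
  using assms
proof (induction N)
  case 0
  then show ?case by (cases "a = 0") (auto simp: sum.cl_ivl_Suc)
next
  case (Suc N)
  show ?case
  proof (cases "Suc N < a")
    case True
    then show ?thesis by simp
  next
    case False
    have IH: "(\<Sum>i=a..Suc N. \<Sum>j=a..N. f i j) = 0" using Suc by auto
    have "(\<Sum>i=a..Suc (Suc N). \<Sum>j=a..Suc N. f i j)
        = (\<Sum>i=a..Suc (Suc N). \<Sum>j=a..N. f i j) + (\<Sum>i=a..Suc (Suc N). f i (Suc N))"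
      using False by (simp add: sum.cl_ivl_Suc sum.distrib)
    also have "\<dots> = (\<Sum>j=a..Suc N. f (Suc (Suc N)) j) + (\<Sum>i=a..Suc N. f i (Suc N))"
      using False IH by (simp add: sum.cl_ivl_Suc algebra_simps)
    also have "\<dots> = (\<Sum>i=a..Suc N. f i (Suc N) + f (Suc (Suc N)) i)"
      by (simp add: sum.distrib)
    also have "\<dots> = 0" using Suc.prems by (intro sum.neutral) auto
    finally show ?thesis .
  qed
qed

section \<open>Representable modules\<close>

lemma lmodD:
  assumes "lmod obj Hom M act"
  shows lmod_ksubspace: "ksubspace (M m)"
    and lmod_act_closed: "\<phi> \<in> Hom n m \<Longrightarrow> v \<in> M n \<Longrightarrow> act n m \<phi> v \<in> M m"
    and lmod_act_klinear: "\<phi> \<in> Hom n m \<Longrightarrow> klinear (M n) (act n m \<phi>)"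
    and lmod_act_compose: "\<phi> \<in> Hom n m \<Longrightarrow> \<psi> \<in> Hom m p \<Longrightarrow> v \<in> M n \<Longrightarrow>
      act n p (compose (obj n) \<psi> \<phi>) v = act m p \<psi> (act n m \<phi> v)"
  using assms unfolding lmod_def by blast+

lemma lmod_homD:
  assumes "lmod_hom Hom M actM N actN f"
  shows lmod_hom_closed: "v \<in> M m \<Longrightarrow> f m v \<in> N m"
    and lmod_hom_klinear: "klinear (M m) (f m)"
    and lmod_hom_natural: "\<phi> \<in> Hom n m \<Longrightarrow> v \<in> M n \<Longrightarrow> f m (actM n m \<phi> v) = actN n m \<phi> (f n v)"
  using assms unfolding lmod_hom_def by blast+

locale finite_hom_category =
  fixes obj :: "nat \<Rightarrow> 'a set" and Hom :: "nat \<Rightarrow> nat \<Rightarrow> ('a \<Rightarrow> 'a) set"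
  assumes finite_Hom: "finite (Hom n m)"
    and Hom_PiE: "\<phi> \<in> Hom n m \<Longrightarrow> \<phi> \<in> PiE (obj n) (\<lambda>_. obj m)"
    and id_in_Hom: "(\<lambda>x\<in>obj n. x) \<in> Hom n n"
    and compose_in_Hom: "\<phi> \<in> Hom n m \<Longrightarrow> \<psi> \<in> Hom m p \<Longrightarrow> compose (obj n) \<psi> \<phi> \<in> Hom n p"
begin

lemma compose_id_left: "\<phi> \<in> Hom n m \<Longrightarrow> compose (obj n) (\<lambda>x\<in>obj m. x) \<phi> = \<phi>"
  using Hom_PiE by (intro Id_compose) (auto simp: PiE_def)

lemma compose_id_right: "\<phi> \<in> Hom n m \<Longrightarrow> compose (obj n) \<phi> (\<lambda>x\<in>obj n. x) = \<phi>"
  using Hom_PiE by (intro compose_Id) (auto simp: PiE_def)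

lemma compose_assoc_Hom: "\<phi> \<in> Hom n m \<Longrightarrow>
    compose (obj n) (compose (obj m) \<chi> \<psi>) \<phi> = compose (obj n) \<chi> (compose (obj n) \<psi> \<phi>)"
  using Hom_PiE by (intro compose_assoc[symmetric]) (auto simp: PiE_def)

lemma Pmod_iff: "c \<in> Pmod Hom n m \<longleftrightarrow> (\<forall>\<phi>. c \<phi> \<noteq> 0 \<longrightarrow> \<phi> \<in> Hom n m)"
  unfolding Pmod_def using finite_subset[of "{\<phi>. c \<phi> \<noteq> 0}" "Hom n m"] finite_Hom[of n m] by auto

lemma ksubspace_Pmod: "ksubspace (Pmod Hom n m)"
  unfolding ksubspace_def vzero_def vadd_def vscale_def
  by (auto simp: Pmod_iff) (metis add.right_neutral add_0)

lemma basis_vec_in_Pmod: "\<phi> \<in> Hom n m \<Longrightarrow> basis_vec \<phi> \<in> Pmod Hom n m"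
  unfolding Pmod_iff basis_vec_def by auto

lemma lincomb_in_Pmod: "finite A \<Longrightarrow> \<forall>s\<in>A. V s \<in> Pmod Hom n m \<Longrightarrow> lincomb A a V \<in> Pmod Hom n m"
  using ksubspace_lincomb[OF ksubspace_Pmod] .

lemma Pmod_basis_expansion: "c \<in> Pmod Hom n m \<Longrightarrow> lincomb (Hom n m) c basis_vec = c"
  unfolding Pmod_iff lincomb_def basis_vec_def
  by (rule ext) (auto simp: of_bool_def finite_Hom if_distrib cong: if_cong)

lemma klinear_expand_Pmod:
  assumes "klinear (Pmod Hom n m) F" "c \<in> Pmod Hom n m"
  shows "F c = lincomb (Hom n m) c (\<lambda>\<phi>. F (basis_vec \<phi>))"
proof -
  have "F c = F (lincomb (Hom n m) c basis_vec)"
    using Pmod_basis_expansion[OF assms(2)] by simp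
  also have "\<dots> = lincomb (Hom n m) c (\<lambda>\<phi>. F (basis_vec \<phi>))"
    by (rule klinear_lincomb[OF assms(1) ksubspace_Pmod finite_Hom]) (simp add: basis_vec_in_Pmod)
  finally show ?thesis .
qed

lemma klinear_actP: "klinear (Pmod Hom r p) (actP obj Hom r p q \<alpha>)"
  by (simp add: actP_eq_kernel_op klinear_kernel_op)

lemma klinear_dP: "klinear (Pmod Hom n m) (dP obj Hom ud n m)"
  by (simp add: dP_eq_kernel_op klinear_kernel_op)

lemma actP_lincomb:
  "actP obj Hom n p q \<alpha> (lincomb A a V) = lincomb A a (\<lambda>s. actP obj Hom n p q \<alpha> (V s))"
  by (simp add: actP_eq_kernel_op kernel_op_lincomb)

lemma actP_basis_vec:
  "\<beta> \<in> Hom n p \<Longrightarrow> actP obj Hom n p q \<alpha> (basis_vec \<beta>) = basis_vec (compose (obj n) \<alpha> \<beta>)"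
  by (simp add: actP_eq_kernel_op kernel_op_basis_vec finite_Hom) (auto simp: basis_vec_def)

lemma actP_expand: "c \<in> Pmod Hom r p \<Longrightarrow>
    actP obj Hom r p q \<alpha> c = lincomb (Hom r p) c (\<lambda>\<beta>. basis_vec (compose (obj r) \<alpha> \<beta>))"
  by (simp add: klinear_expand_Pmod[OF klinear_actP] actP_basis_vec)

lemma actP_compose:
  assumes "\<alpha> \<in> Hom p q" "\<beta> \<in> Hom q s" "c \<in> Pmod Hom r p"
  shows "actP obj Hom r p s (compose (obj p) \<beta> \<alpha>) c = actP obj Hom r q s \<beta> (actP obj Hom r p q \<alpha> c)"
proof -
  have "actP obj Hom r q s \<beta> (actP obj Hom r p q \<alpha> c)
      = lincomb (Hom r p) c (\<lambda>\<phi>. actP obj Hom r q s \<beta> (basis_vec (compose (obj r) \<alpha> \<phi>)))"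
    using assms by (simp add: actP_expand actP_lincomb)
  also have "\<dots> = lincomb (Hom r p) c (\<lambda>\<phi>. basis_vec (compose (obj r) (compose (obj p) \<beta> \<alpha>) \<phi>))"
    using assms by (intro lincomb_cong) (simp add: actP_basis_vec compose_in_Hom compose_assoc_Hom)
  finally show ?thesis using assms by (simp add: actP_expand)
qed

lemma actP_in_Pmod: "\<alpha> \<in> Hom p q \<Longrightarrow> c \<in> Pmod Hom r p \<Longrightarrow> actP obj Hom r p q \<alpha> c \<in> Pmod Hom r q"
  by (simp add: actP_expand lincomb_in_Pmod finite_Hom basis_vec_in_Pmod compose_in_Hom)

lemma actP_id: "c \<in> Pmod Hom r p \<Longrightarrow> actP obj Hom r p p (\<lambda>x\<in>obj p. x) c = c"
  by (simp add: actP_expand compose_id_left Pmod_basis_expansion)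

lemma lmod_P: "lmod obj Hom (Pmod Hom r) (actP obj Hom r)"
  unfolding lmod_def by (auto simp: ksubspace_Pmod actP_in_Pmod klinear_actP actP_id actP_compose)

lemma dP_lincomb: "dP obj Hom ud n m (lincomb A a V) = lincomb A a (\<lambda>s. dP obj Hom ud n m (V s))"
  by (simp add: dP_eq_kernel_op kernel_op_lincomb)

lemma dP_basis_vec: "\<phi> \<in> Hom n m \<Longrightarrow> dP obj Hom ud n m (basis_vec \<phi>)
    = lincomb (Hom (n - 1) n) (ud n) (\<lambda>\<theta>. basis_vec (compose (obj (n - 1)) \<phi> \<theta>))"
  unfolding dP_eq_kernel_op
  by (subst kernel_op_basis_vec) (auto simp: finite_Hom basis_vec_def lincomb_def mult.commute intro!: ext sum.cong)

lemma dP_expand: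
  "c \<in> Pmod Hom n m \<Longrightarrow> dP obj Hom ud n m c = lincomb (Hom n m) c (\<lambda>\<phi>. dP obj Hom ud n m (basis_vec \<phi>))"
  by (rule klinear_expand_Pmod[OF klinear_dP])

lemma dP_natural:
  assumes "\<alpha> \<in> Hom p q" "c \<in> Pmod Hom n p"
  shows "dP obj Hom ud n q (actP obj Hom n p q \<alpha> c) = actP obj Hom (n - 1) p q \<alpha> (dP obj Hom ud n p c)"
proof -
  have "dP obj Hom ud n q (actP obj Hom n p q \<alpha> c) = lincomb (Hom n p) c (\<lambda>\<beta>.
      lincomb (Hom (n - 1) n) (ud n) (\<lambda>\<theta>. basis_vec (compose (obj (n - 1)) (compose (obj n) \<alpha> \<beta>) \<theta>)))"
    using assms by (simp add: actP_expand dP_lincomb dP_basis_vec compose_in_Hom)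
  also have "\<dots> = lincomb (Hom n p) c (\<lambda>\<beta>. lincomb (Hom (n - 1) n) (ud n)
      (\<lambda>\<theta>. actP obj Hom (n - 1) p q \<alpha> (basis_vec (compose (obj (n - 1)) \<beta> \<theta>))))"
    by (intro lincomb_cong) (simp add: actP_basis_vec compose_in_Hom compose_assoc_Hom)
  also have "\<dots> = actP obj Hom (n - 1) p q \<alpha> (dP obj Hom ud n p c)"
    using assms by (simp add: dP_expand dP_basis_vec actP_lincomb)
  finally show ?thesis .
qed

lemma dP_in_Pmod:
  assumes "c \<in> Pmod Hom n m" shows "dP obj Hom ud n m c \<in> Pmod Hom (n - 1) m"
  unfolding dP_expand[OF assms] by (simp add: dP_basis_vec lincomb_in_Pmod finite_Hom basis_vec_in_Pmod compose_in_Hom)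

lemma lmod_hom_dP: "lmod_hom Hom (Pmod Hom n) (actP obj Hom n)
    (Pmod Hom (n - 1)) (actP obj Hom (n - 1)) (dP obj Hom ud n)"
  unfolding lmod_hom_def using dP_in_Pmod klinear_dP dP_natural by blast

lemma aug_lincomb: "aug Hom m (lincomb A a V) = (\<Sum>s\<in>A. a s * aug Hom m (V s))"
  unfolding aug_def lincomb_def by (simp add: sum.swap[of _ A] sum_distrib_left)

lemma aug_basis_vec: "\<phi> \<in> Hom 0 m \<Longrightarrow> aug Hom m (basis_vec \<phi>) = 1"
  by (simp add: aug_def basis_vec_def finite_Hom)

lemma klinear_aug: "klinear (Pmod Hom 0 m) (\<lambda>c (_::unit). aug Hom m c)"
  unfolding klinear_def vadd_def vscale_def aug_def by (simp add: sum.distrib sum_distrib_left)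

lemma aug_actP: "\<alpha> \<in> Hom p q \<Longrightarrow> c \<in> Pmod Hom 0 p \<Longrightarrow> aug Hom q (actP obj Hom 0 p q \<alpha> c) = aug Hom p c"
  by (simp add: actP_expand aug_lincomb aug_basis_vec compose_in_Hom) (simp add: aug_def)

text \<open>Projectivity of \<open>P\<^sub>r\<close> is the Yoneda lemma: module maps \<open>P\<^sub>r \<rightarrow> M\<close> correspond to
  elements of \<open>M r\<close>, the value at the identity of \<open>r\<close>.\<close>

definition yoneda_map :: "(nat \<Rightarrow> nat \<Rightarrow> ('a \<Rightarrow> 'a) \<Rightarrow> ('x \<Rightarrow> 'k) \<Rightarrow> 'x \<Rightarrow> 'k) \<Rightarrow> nat \<Rightarrow> ('x \<Rightarrow> 'k) \<Rightarrow>
    nat \<Rightarrow> (('a \<Rightarrow> 'a) \<Rightarrow> 'k) \<Rightarrow> 'x \<Rightarrow> 'k::field" where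
  "yoneda_map act r v m = kernel_op (Hom r m) (\<lambda>x \<phi>. act r m \<phi> v x)"

lemma yoneda_map_eq_lincomb: "yoneda_map act r v m c = lincomb (Hom r m) c (\<lambda>\<phi>. act r m \<phi> v)"
  unfolding yoneda_map_def kernel_op_def lincomb_def by (simp add: mult.commute)

lemma yoneda_map_basis_vec: "\<phi> \<in> Hom r m \<Longrightarrow> yoneda_map act r v m (basis_vec \<phi>) = act r m \<phi> v"
  unfolding yoneda_map_def by (simp add: kernel_op_basis_vec finite_Hom)

lemma lmod_hom_yoneda_map:
  assumes M: "lmod obj Hom M act" and v: "v \<in> M r"
  shows "lmod_hom Hom (Pmod Hom r) (actP obj Hom r) M act (yoneda_map act r v)"
proof -
  have closed: "yoneda_map act r v m c \<in> M m" for m c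
    unfolding yoneda_map_eq_lincomb
    by (rule ksubspace_lincomb[OF lmod_ksubspace[OF M] finite_Hom]) (auto intro: lmod_act_closed[OF M] v)
  have natural: "yoneda_map act r v q (actP obj Hom r p q \<alpha> c) = act p q \<alpha> (yoneda_map act r v p c)"
    if \<alpha>: "\<alpha> \<in> Hom p q" and c: "c \<in> Pmod Hom r p" for p q \<alpha> c
  proof -
    have "yoneda_map act r v q (actP obj Hom r p q \<alpha> c)
        = lincomb (Hom r p) c (\<lambda>\<beta>. act r q (compose (obj r) \<alpha> \<beta>) v)"
      unfolding actP_expand[OF c] yoneda_map_def kernel_op_lincomb
      by (simp add: yoneda_map_basis_vec compose_in_Hom[OF _ \<alpha>] flip: yoneda_map_def)
    also have "\<dots> = lincomb (Hom r p) c (\<lambda>\<beta>. act p q \<alpha> (act r p \<beta> v))"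
      using \<alpha> by (intro lincomb_cong) (simp add: lmod_act_compose[OF M] v)
    also have "\<dots> = act p q \<alpha> (yoneda_map act r v p c)"
      unfolding yoneda_map_eq_lincomb
      by (rule klinear_lincomb[OF lmod_act_klinear[OF M \<alpha>] lmod_ksubspace[OF M] finite_Hom, symmetric])
        (auto intro: lmod_act_closed[OF M] v)
    finally show ?thesis .
  qed
  show ?thesis
    unfolding lmod_hom_def using closed natural by (simp add: yoneda_map_def klinear_kernel_op)
qed

lemma lmod_hom_comp_yoneda_map:
  assumes M: "lmod obj Hom M actM" and f: "lmod_hom Hom M actM N actN f" and v: "v \<in> M r"
  shows "f m (yoneda_map actM r v m c) = yoneda_map actN r (f r v) m c"
  unfolding yoneda_map_eq_lincomb
  by (subst klinear_lincomb[OF lmod_hom_klinear[OF f] lmod_ksubspace[OF M] finite_Hom])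
    (auto intro!: lincomb_cong lmod_act_closed[OF M] v simp: lmod_hom_natural[OF f] v)

lemma lmod_hom_from_P_eq_yoneda_map:
  assumes g: "lmod_hom Hom (Pmod Hom r) (actP obj Hom r) N actN g" and c: "c \<in> Pmod Hom r m"
  shows "g m c = yoneda_map actN r (g r (basis_vec (\<lambda>x\<in>obj r. x))) m c"
proof -
  have "g m (basis_vec \<phi>) = actN r m \<phi> (g r (basis_vec (\<lambda>x\<in>obj r. x)))" if "\<phi> \<in> Hom r m" for \<phi>
    using lmod_hom_natural[OF g that basis_vec_in_Pmod[OF id_in_Hom]] that
    by (simp add: actP_basis_vec id_in_Hom compose_id_right)
  then show ?thesis
    unfolding yoneda_map_eq_lincomb by (simp add: klinear_expand_Pmod[OF lmod_hom_klinear[OF g] c] cong: lincomb_cong)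
qed

lemma projective_P: "projective_lmod TYPE('x) TYPE('y) obj Hom
    (Pmod Hom r :: nat \<Rightarrow> (('a \<Rightarrow> 'a) \<Rightarrow> 'k::field) set) (actP obj Hom r)"
  unfolding projective_lmod_def
proof (intro allI impI, elim conjE)
  fix M :: "nat \<Rightarrow> ('x \<Rightarrow> 'k) set" and actM and N :: "nat \<Rightarrow> ('y \<Rightarrow> 'k) set" and actN f g
  assume M: "lmod obj Hom M actM" and f: "lmod_hom Hom M actM N actN f" and surj: "\<forall>m. f m ` M m = N m"
    and g: "lmod_hom Hom (Pmod Hom r) (actP obj Hom r) N actN g"
  define e where "e = (basis_vec (\<lambda>x\<in>obj r. x) :: ('a \<Rightarrow> 'a) \<Rightarrow> 'k)"
  have "g r e \<in> f r ` M r"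
    using lmod_hom_closed[OF g basis_vec_in_Pmod[OF id_in_Hom]] surj by (auto simp: e_def)
  then obtain v where v: "v \<in> M r" and fv: "f r v = g r e" by auto
  have "f m (yoneda_map actM r v m c) = g m c" if "c \<in> Pmod Hom r m" for m c
    using lmod_hom_comp_yoneda_map[OF M f v] lmod_hom_from_P_eq_yoneda_map[OF g that] fv
    by (simp add: e_def)
  then show "\<exists>h. lmod_hom Hom (Pmod Hom r) (actP obj Hom r) M actM h \<and>
      (\<forall>m. \<forall>c\<in>Pmod Hom r m. f m (h m c) = g m c)"
    using lmod_hom_yoneda_map[OF M v] by blast
qed

end

section \<open>Resolutions from contracting homotopies\<close>

text \<open>The assumption \<open>ud_comp_ud\<close> says that the formal composite \<open>u(d\<^sub>n\<^sub>+\<^sub>1) u(d\<^sub>n)\<close> vanishes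
  in \<open>k[Hom(n - 1, n + 1)]\<close>, tested against an arbitrary function \<open>F\<close> on that hom-set.\<close>

locale contracting_homotopy = finite_hom_category obj Hom
  for obj :: "nat \<Rightarrow> 'a set" and Hom :: "nat \<Rightarrow> nat \<Rightarrow> ('a \<Rightarrow> 'a) set" +
  fixes ud :: "nat \<Rightarrow> ('a \<Rightarrow> 'a) \<Rightarrow> 'k::field"
    and hb :: "nat \<Rightarrow> nat \<Rightarrow> ('a \<Rightarrow> 'a) \<Rightarrow> ('a \<Rightarrow> 'a) \<Rightarrow> 'k"
    and vertex :: "nat \<Rightarrow> 'a \<Rightarrow> 'a"
  assumes vertex_in_Hom: "vertex m \<in> Hom 0 m"
    and ud_comp_ud: "1 \<le> n \<Longrightarrow> (\<Sum>\<theta>\<in>Hom n (Suc n). \<Sum>\<theta>'\<in>Hom (n - 1) n.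
      ud (Suc n) \<theta> * ud n \<theta>' * F (compose (obj (n - 1)) \<theta> \<theta>')) = 0"
    and sum_ud_1: "(\<Sum>\<theta>\<in>Hom 0 1. ud 1 \<theta>) = 0"
    and hb_in_Pmod: "\<phi> \<in> Hom n m \<Longrightarrow> hb n m \<phi> \<in> Pmod Hom (Suc n) m"
    and hb_homotopy: "1 \<le> n \<Longrightarrow> \<phi> \<in> Hom n m \<Longrightarrow>
      dP obj Hom ud (Suc n) m (hb n m \<phi>) +
      lincomb (Hom (n - 1) n) (ud n) (\<lambda>\<theta>. hb (n - 1) m (compose (obj (n - 1)) \<phi> \<theta>)) = basis_vec \<phi>"
    and hb_homotopy_0: "\<phi> \<in> Hom 0 m \<Longrightarrow>
      dP obj Hom ud 1 m (hb 0 m \<phi>) = basis_vec \<phi> - basis_vec (vertex m)"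
begin

definition homotopy :: "nat \<Rightarrow> nat \<Rightarrow> (('a \<Rightarrow> 'a) \<Rightarrow> 'k) \<Rightarrow> ('a \<Rightarrow> 'a) \<Rightarrow> 'k" where
  "homotopy n m = kernel_op (Hom n m) (\<lambda>\<chi> \<phi>. hb n m \<phi> \<chi>)"

lemma homotopy_eq_lincomb: "homotopy n m c = lincomb (Hom n m) c (hb n m)"
  unfolding homotopy_def kernel_op_def lincomb_def by (auto intro!: ext simp: mult.commute)

lemma homotopy_lincomb: "homotopy n m (lincomb A a V) = lincomb A a (\<lambda>s. homotopy n m (V s))"
  by (simp add: homotopy_def kernel_op_lincomb)

lemma homotopy_basis_vec: "\<phi> \<in> Hom n m \<Longrightarrow> homotopy n m (basis_vec \<phi>) = hb n m \<phi>"
  by (simp add: homotopy_def kernel_op_basis_vec finite_Hom)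

lemma homotopy_in_Pmod: "homotopy n m c \<in> Pmod Hom (Suc n) m"
  by (simp add: homotopy_eq_lincomb lincomb_in_Pmod finite_Hom hb_in_Pmod)

lemma dP_homotopy_plus_homotopy_dP:
  assumes n: "1 \<le> n" and c: "c \<in> Pmod Hom n m"
  shows "dP obj Hom ud (Suc n) m (homotopy n m c) + homotopy (n - 1) m (dP obj Hom ud n m c) = c"
proof -
  have "dP obj Hom ud (Suc n) m (homotopy n m c)
      = lincomb (Hom n m) c (\<lambda>\<phi>. dP obj Hom ud (Suc n) m (hb n m \<phi>))"
    by (simp add: homotopy_eq_lincomb dP_lincomb)
  moreover have "homotopy (n - 1) m (dP obj Hom ud n m c) = lincomb (Hom n m) c (\<lambda>\<phi>.
      lincomb (Hom (n - 1) n) (ud n) (\<lambda>\<theta>. hb (n - 1) m (compose (obj (n - 1)) \<phi> \<theta>)))"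
    unfolding dP_expand[OF c]
    by (simp add: homotopy_lincomb dP_basis_vec homotopy_basis_vec compose_in_Hom)
  ultimately show ?thesis
    using hb_homotopy[OF n] Pmod_basis_expansion[OF c] by (simp add: lincomb_add)
qed

lemma dP_homotopy_0:
  assumes c: "c \<in> Pmod Hom 0 m"
  shows "dP obj Hom ud 1 m (homotopy 0 m c) = c - (\<lambda>\<phi>. aug Hom m c * basis_vec (vertex m) \<phi>)"
proof -
  have "dP obj Hom ud 1 m (homotopy 0 m c)
      = lincomb (Hom 0 m) c (\<lambda>\<phi>. basis_vec \<phi> - basis_vec (vertex m))"
    using hb_homotopy_0 by (simp add: homotopy_eq_lincomb dP_lincomb)
  then show ?thesis
    using Pmod_basis_expansion[OF c] by (simp add: lincomb_diff[symmetric] lincomb_const aug_def)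
qed

lemma aug_dP_1:
  assumes "b \<in> Pmod Hom 1 m" shows "aug Hom m (dP obj Hom ud 1 m b) = 0"
  unfolding dP_expand[OF assms] using sum_ud_1
  by (simp add: dP_basis_vec aug_lincomb aug_basis_vec compose_in_Hom flip: sum_distrib_left)

lemma exact_at_0:
  assumes c: "c \<in> Pmod Hom 0 m"
  shows "aug Hom m c = 0 \<longleftrightarrow> (\<exists>b\<in>Pmod Hom 1 m. dP obj Hom ud 1 m b = c)"
proof
  assume "aug Hom m c = 0"
  then have "dP obj Hom ud 1 m (homotopy 0 m c) = c"
    using dP_homotopy_0[OF c] by (simp add: zero_fun_def[symmetric])
  then show "\<exists>b\<in>Pmod Hom 1 m. dP obj Hom ud 1 m b = c" using homotopy_in_Pmod[of 0] by auto
qed (use aug_dP_1 in blast)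

lemma dP_dP_basis_vec:
  assumes n: "1 \<le> n" and \<phi>: "\<phi> \<in> Hom (Suc n) m"
  shows "dP obj Hom ud n m (dP obj Hom ud (Suc n) m (basis_vec \<phi>)) = (\<lambda>_. 0)"
proof
  fix \<psi>
  have "dP obj Hom ud n m (dP obj Hom ud (Suc n) m (basis_vec \<phi>)) = lincomb (Hom n (Suc n)) (ud (Suc n))
      (\<lambda>\<theta>. lincomb (Hom (n - 1) n) (ud n) (\<lambda>\<theta>'. basis_vec (compose (obj (n - 1)) \<phi> (compose (obj (n - 1)) \<theta> \<theta>'))))"
    using \<phi> by (simp add: dP_basis_vec dP_lincomb compose_in_Hom compose_assoc_Hom)
  then have "dP obj Hom ud n m (dP obj Hom ud (Suc n) m (basis_vec \<phi>)) \<psi> =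
      (\<Sum>\<theta>\<in>Hom n (Suc n). \<Sum>\<theta>'\<in>Hom (n - 1) n. ud (Suc n) \<theta> * ud n \<theta>' *
        (\<lambda>\<chi>. basis_vec (compose (obj (n - 1)) \<phi> \<chi>) \<psi>) (compose (obj (n - 1)) \<theta> \<theta>'))"
    by (simp only: lincomb_def sum_distrib_left mult.assoc)
  also have "\<dots> = 0" by (rule ud_comp_ud[OF n])
  finally show "dP obj Hom ud n m (dP obj Hom ud (Suc n) m (basis_vec \<phi>)) \<psi> = 0" .
qed

lemma dP_dP:
  assumes "1 \<le> n" "b \<in> Pmod Hom (Suc n) m"
  shows "dP obj Hom ud n m (dP obj Hom ud (Suc n) m b) = (\<lambda>_. 0)"
  unfolding dP_expand[OF assms(2)] dP_lincomb by (simp add: dP_dP_basis_vec[OF assms(1)] lincomb_def)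

lemma exact_at:
  assumes n: "1 \<le> n" and c: "c \<in> Pmod Hom n m"
  shows "dP obj Hom ud n m c = (\<lambda>_. 0) \<longleftrightarrow> (\<exists>b\<in>Pmod Hom (Suc n) m. dP obj Hom ud (Suc n) m b = c)"
proof
  assume "dP obj Hom ud n m c = (\<lambda>_. 0)"
  then have "homotopy (n - 1) m (dP obj Hom ud n m c) = 0"
    by (simp add: homotopy_def kernel_op_zero zero_fun_def)
  then have "dP obj Hom ud (Suc n) m (homotopy n m c) = c"
    using dP_homotopy_plus_homotopy_dP[OF n c] by simp
  then show "\<exists>b\<in>Pmod Hom (Suc n) m. dP obj Hom ud (Suc n) m b = c" using homotopy_in_Pmod by blast
qed (use dP_dP[OF n] in blast)

lemma aug_surj: "\<exists>c\<in>Pmod Hom 0 m. aug Hom m c = a"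
proof
  show "(\<lambda>\<phi>. a * basis_vec (vertex m) \<phi>) \<in> Pmod Hom 0 m"
    by (auto simp: Pmod_iff basis_vec_def vertex_in_Hom)
  show "aug Hom m (\<lambda>\<phi>. a * basis_vec (vertex m) \<phi>) = a"
    by (simp add: aug_def basis_vec_def of_bool_def if_distrib finite_Hom vertex_in_Hom cong: if_cong)
qed

theorem proj_resolution: "proj_resolution TYPE('x) TYPE('y) obj Hom ud"
  unfolding proj_resolution_def
  by (intro conjI allI impI ballI lmod_P projective_P lmod_hom_dP klinear_aug aug_actP aug_surj
      exact_at_0 exact_at)

end

section \<open>The semi-simplex category\<close>

lemma finite_Hom_D: "finite (Hom_D n m)"
proof -
  have "Hom_D n m \<subseteq> PiE {0..n} (\<lambda>_. {0..m})" by (auto simp: Hom_D_def)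
  then show ?thesis by (rule finite_subset) (simp add: finite_PiE)
qed

lemma finite_hom_category_D: "finite_hom_category obj_D Hom_D"
proof
  show "finite (Hom_D n m)" for n m by (rule finite_Hom_D)
  show "\<phi> \<in> Hom_D n m \<Longrightarrow> \<phi> \<in> PiE (obj_D n) (\<lambda>_. obj_D m)" for \<phi> n m
    by (simp add: Hom_D_def obj_D_def)
  show "(\<lambda>x\<in>obj_D n. x) \<in> Hom_D n n" for n
    by (auto simp: Hom_D_def obj_D_def strict_mono_on_def)
  show "compose (obj_D n) \<psi> \<phi> \<in> Hom_D n p" if "\<phi> \<in> Hom_D n m" "\<psi> \<in> Hom_D m p" for \<phi> \<psi> n m p
    using that by (auto simp: Hom_D_def obj_D_def strict_mono_on_def compose_def PiE_iff)
qed

interpretation Delta: finite_hom_category obj_D Hom_D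
  by (rule finite_hom_category_D)

lemma Hom_D_less: "\<phi> \<in> Hom_D n m \<Longrightarrow> i < j \<Longrightarrow> j \<le> n \<Longrightarrow> \<phi> i < \<phi> j"
  by (auto simp: Hom_D_def strict_mono_on_def)

lemma coface_D_in_Hom: "1 \<le> n \<Longrightarrow> i \<le> n \<Longrightarrow> coface_D n i \<in> Hom_D (n - 1) n"
  by (auto simp: Hom_D_def coface_D_def strict_mono_on_def)

lemma sum_ud_D:
  assumes "1 \<le> n"
  shows "(\<Sum>\<theta>\<in>Hom_D (n - 1) n. ud_D n \<theta> * G \<theta>) = (\<Sum>i=0..n. (-1) ^ i * G (coface_D n i) :: 'k::field)"
proof -
  have "(\<Sum>\<theta>\<in>Hom_D (n - 1) n. ud_D n \<theta> * G \<theta>)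
      = (\<Sum>i=0..n. \<Sum>\<theta>\<in>Hom_D (n - 1) n. if \<theta> = coface_D n i then (-1) ^ i * G \<theta> else 0)"
    unfolding ud_D_def sum_distrib_right by (subst sum.swap) (intro sum.cong refl, auto)
  also have "\<dots> = (\<Sum>i=0..n. (-1) ^ i * G (coface_D n i))"
    using coface_D_in_Hom[OF assms] by (intro sum.cong) (auto simp: finite_Hom_D)
  finally show ?thesis .
qed

lemma lincomb_ud_D: "1 \<le> n \<Longrightarrow>
    lincomb (Hom_D (n - 1) n) (ud_D n) V = (\<lambda>x. \<Sum>i=0..n. (-1) ^ i * V (coface_D n i) x :: 'k::field)"
  unfolding lincomb_def by (rule ext) (rule sum_ud_D)

lemma coface_D_comp_coface_D: "i \<le> j \<Longrightarrow> j \<le> n \<Longrightarrow>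
    compose (obj_D (n - 1)) (coface_D (Suc n) i) (coface_D n j) =
    compose (obj_D (n - 1)) (coface_D (Suc n) (Suc j)) (coface_D n i)"
  by (rule ext) (auto simp: compose_def coface_D_def obj_D_def)

lemma ud_D_comp_ud_D:
  assumes n: "1 \<le> n"
  shows "(\<Sum>\<theta>\<in>Hom_D n (Suc n). \<Sum>\<theta>'\<in>Hom_D (n - 1) n.
     ud_D (Suc n) \<theta> * ud_D n \<theta>' * F (compose (obj_D (n - 1)) \<theta> \<theta>')) = (0 :: 'k::field)"
proof -
  have "(\<Sum>\<theta>\<in>Hom_D n (Suc n). \<Sum>\<theta>'\<in>Hom_D (n - 1) n.
      ud_D (Suc n) \<theta> * ud_D n \<theta>' * F (compose (obj_D (n - 1)) \<theta> \<theta>'))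
    = (\<Sum>\<theta>\<in>Hom_D (Suc n - 1) (Suc n). ud_D (Suc n) \<theta> *
        (\<Sum>\<theta>'\<in>Hom_D (n - 1) n. ud_D n \<theta>' * F (compose (obj_D (n - 1)) \<theta> \<theta>')))"
    by (simp add: sum_distrib_left mult.assoc)
  also have "\<dots> = (\<Sum>i=0..Suc n. (-1) ^ i * (\<Sum>j=0..n. (-1) ^ j *
      F (compose (obj_D (n - 1)) (coface_D (Suc n) i) (coface_D n j))))"
  proof -
    have outer: "(\<Sum>\<theta>\<in>Hom_D (Suc n - 1) (Suc n). ud_D (Suc n) \<theta> * H \<theta>)
        = (\<Sum>i=0..Suc n. (-1) ^ i * H (coface_D (Suc n) i) :: 'k)" for H
      by (rule sum_ud_D) simp
    show ?thesis by (simp only: sum_ud_D[OF n] outer)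
  qed
  also have "\<dots> = (\<Sum>i=0..Suc n. \<Sum>j=0..n. (-1) ^ i * ((-1) ^ j *
      F (compose (obj_D (n - 1)) (coface_D (Suc n) i) (coface_D n j))))"
    by (simp add: sum_distrib_left)
  also have "\<dots> = 0"
    by (rule double_sum_cancel_pairs) (simp add: coface_D_comp_coface_D[simplified])
  finally show ?thesis .
qed

lemma sum_ud_D_1: "(\<Sum>\<theta>\<in>Hom_D 0 1. ud_D 1 \<theta>) = (0::'k::field)"
  using sum_ud_D[of 1 "\<lambda>_. 1::'k"] by simp

definition cone_D :: "nat \<Rightarrow> (nat \<Rightarrow> nat) \<Rightarrow> nat \<Rightarrow> nat" where
  "cone_D n \<phi> = (\<lambda>j\<in>{0..Suc n}. if j = 0 then 0 else \<phi> (j - 1))"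

definition hb_D :: "nat \<Rightarrow> nat \<Rightarrow> (nat \<Rightarrow> nat) \<Rightarrow> (nat \<Rightarrow> nat) \<Rightarrow> 'k::field" where
  "hb_D n m \<phi> = (if \<phi> 0 = 0 then (\<lambda>_. 0) else basis_vec (cone_D n \<phi>))"

definition vertex_D :: "nat \<Rightarrow> nat \<Rightarrow> nat" where
  "vertex_D m = (\<lambda>x\<in>{0..0}. 0)"

lemma cone_D_in_Hom: "\<phi> \<in> Hom_D n m \<Longrightarrow> \<phi> 0 \<noteq> 0 \<Longrightarrow> cone_D n \<phi> \<in> Hom_D (Suc n) m"
  unfolding Hom_D_def cone_D_def
  apply (auto simp: strict_mono_on_def PiE_iff)
  subgoal for s
    apply (cases "s - Suc 0 = 0")
     apply simp
    apply (drule spec[of _ 0], drule spec[of _ "s - Suc 0"])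
    by auto
  subgoal for r s
    apply (drule spec[of _ "r - Suc 0"], drule spec[of _ "s - Suc 0"])
    by auto
  done

lemma cone_D_comp_coface_0: "\<phi> \<in> Hom_D n m \<Longrightarrow> compose (obj_D n) (cone_D n \<phi>) (coface_D (Suc n) 0) = \<phi>"
  by (rule ext) (auto simp: compose_def cone_D_def coface_D_def obj_D_def Hom_D_def PiE_iff extensional_def)

lemma cone_D_comp_coface_Suc: "1 \<le> n \<Longrightarrow> i \<le> n \<Longrightarrow>
    compose (obj_D n) (cone_D n \<phi>) (coface_D (Suc n) (Suc i)) =
    cone_D (n - 1) (compose (obj_D (n - 1)) \<phi> (coface_D n i))"
  by (rule ext) (auto simp: compose_def cone_D_def coface_D_def obj_D_def)

lemma cone_D_0_comp_coface_1: "compose (obj_D 0) (cone_D 0 \<phi>) (coface_D 1 1) = vertex_D m"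
  by (rule ext) (auto simp: compose_def cone_D_def coface_D_def obj_D_def vertex_D_def)

lemma cone_D_face_0: "1 \<le> n \<Longrightarrow> \<phi> \<in> Hom_D n m \<Longrightarrow> \<phi> 0 = 0 \<Longrightarrow>
    cone_D (n - 1) (compose (obj_D (n - 1)) \<phi> (coface_D n 0)) = \<phi>"
  by (rule ext) (auto simp: compose_def cone_D_def coface_D_def obj_D_def Hom_D_def PiE_iff extensional_def)

lemma compose_coface_D_at_0: "1 \<le> n \<Longrightarrow>
    compose (obj_D (n - 1)) \<phi> (coface_D n i) 0 = \<phi> (if i = 0 then 1 else 0)"
  by (auto simp: compose_def coface_D_def obj_D_def)

lemma Hom_D_0_eq_vertex: "\<phi> \<in> Hom_D 0 m \<Longrightarrow> \<phi> 0 = 0 \<Longrightarrow> \<phi> = vertex_D m"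
  by (rule ext) (auto simp: Hom_D_def vertex_D_def PiE_iff extensional_def)

lemma hb_D_in_Pmod: "\<phi> \<in> Hom_D n m \<Longrightarrow> hb_D n m \<phi> \<in> Pmod Hom_D (Suc n) m"
  by (auto simp: hb_D_def Delta.Pmod_iff basis_vec_def intro: cone_D_in_Hom)

lemma dP_D_zero: "dP obj_D Hom_D ud_D n m (\<lambda>_. 0) = (\<lambda>_. 0)"
  by (simp add: dP_eq_kernel_op kernel_op_zero)

lemma hb_D_homotopy_through_0:
  assumes n: "1 \<le> n" and \<phi>: "\<phi> \<in> Hom_D n m" and \<phi>0: "\<phi> 0 = 0"
  shows "dP obj_D Hom_D ud_D (Suc n) m (hb_D n m \<phi>) + lincomb (Hom_D (n - 1) n) (ud_D n)
     (\<lambda>\<theta>. hb_D (n - 1) m (compose (obj_D (n - 1)) \<phi> \<theta>)) = (basis_vec \<phi> :: _ \<Rightarrow> 'k::field)"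
proof -
  let ?face = "\<lambda>i. compose (obj_D (n - 1)) \<phi> (coface_D n i)"
  have "?face 0 0 \<noteq> 0"
    using compose_coface_D_at_0[OF n, of \<phi> 0] Hom_D_less[OF \<phi>, of 0 1] n by simp
  then have face_0: "hb_D (n - 1) m (?face 0) = (basis_vec \<phi> :: _ \<Rightarrow> 'k)"
    using cone_D_face_0[OF n \<phi> \<phi>0] by (simp add: hb_D_def)
  have faces_Suc: "hb_D (n - 1) m (?face i) = (\<lambda>_. 0 :: 'k)" if "i \<ge> 1" for i
    using compose_coface_D_at_0[OF n, of \<phi> i] \<phi>0 that by (simp add: hb_D_def)
  have "(\<Sum>i=0..n. (-1) ^ i * hb_D (n - 1) m (?face i) x :: 'k) = basis_vec \<phi> x" for x
    using face_0 faces_Suc by (simp add: sum.atLeast_Suc_atMost[of 0 n])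
  moreover have "dP obj_D Hom_D ud_D (Suc n) m (hb_D n m \<phi>) = (\<lambda>_. 0 :: 'k)"
    using \<phi>0 by (simp add: hb_D_def dP_D_zero)
  ultimately show ?thesis unfolding lincomb_ud_D[OF n] by auto
qed

lemma hb_D_homotopy_avoiding_0:
  assumes n: "1 \<le> n" and \<phi>: "\<phi> \<in> Hom_D n m" and \<phi>0: "\<phi> 0 \<noteq> 0"
  shows "dP obj_D Hom_D ud_D (Suc n) m (hb_D n m \<phi>) + lincomb (Hom_D (n - 1) n) (ud_D n)
     (\<lambda>\<theta>. hb_D (n - 1) m (compose (obj_D (n - 1)) \<phi> \<theta>)) = (basis_vec \<phi> :: _ \<Rightarrow> 'k::field)"
proof -
  let ?face = "\<lambda>i. compose (obj_D (n - 1)) \<phi> (coface_D n i)"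
  have "dP obj_D Hom_D ud_D (Suc n) m (hb_D n m \<phi>)
      = lincomb (Hom_D n (Suc n)) (ud_D (Suc n)) (\<lambda>\<theta>. basis_vec (compose (obj_D n) (cone_D n \<phi>) \<theta>))"
    using \<phi>0 Delta.dP_basis_vec[OF cone_D_in_Hom[OF \<phi> \<phi>0]] by (simp add: hb_D_def)
  also have "\<dots> = (\<lambda>x. \<Sum>i=0..Suc n. (-1) ^ i *
      basis_vec (compose (obj_D n) (cone_D n \<phi>) (coface_D (Suc n) i)) x :: 'k)"
    using lincomb_ud_D[of "Suc n"] by simp
  also have "\<dots> = (\<lambda>x. basis_vec \<phi> x - (\<Sum>i=0..n. (-1) ^ i * basis_vec (cone_D (n - 1) (?face i)) x))"
    unfolding sum.atLeast0_atMost_Suc_shift cone_D_comp_coface_0[OF \<phi>]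
    by (simp add: cone_D_comp_coface_Suc[OF n] sum_negf)
  finally have d: "dP obj_D Hom_D ud_D (Suc n) m (hb_D n m \<phi>) = \<dots>" .
  have "hb_D (n - 1) m (?face i) = (basis_vec (cone_D (n - 1) (?face i)) :: _ \<Rightarrow> 'k)" for i
    using compose_coface_D_at_0[OF n, of \<phi> i] Hom_D_less[OF \<phi>, of 0 1] n \<phi>0 by (simp add: hb_D_def)
  then show ?thesis unfolding d lincomb_ud_D[OF n] by (auto intro!: ext)
qed

lemma hb_D_homotopy_0:
  assumes \<phi>: "\<phi> \<in> Hom_D 0 m"
  shows "dP obj_D Hom_D ud_D 1 m (hb_D 0 m \<phi>) = (basis_vec \<phi> - basis_vec (vertex_D m) :: _ \<Rightarrow> 'k::field)"
proof (cases "\<phi> 0 = 0")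
  case True
  then show ?thesis using Hom_D_0_eq_vertex[OF \<phi> True] by (simp add: hb_D_def dP_D_zero zero_fun_def)
next
  case False
  have "dP obj_D Hom_D ud_D 1 m (hb_D 0 m \<phi>)
      = lincomb (Hom_D 0 1) (ud_D 1) (\<lambda>\<theta>. basis_vec (compose (obj_D 0) (cone_D 0 \<phi>) \<theta>))"
    using False Delta.dP_basis_vec[OF cone_D_in_Hom[OF \<phi> False]] by (simp add: hb_D_def)
  also have "\<dots> = (\<lambda>x. \<Sum>i=0..1. (-1) ^ i * basis_vec (compose (obj_D 0) (cone_D 0 \<phi>) (coface_D 1 i)) x)"
    using lincomb_ud_D[of 1] by simp
  also have "\<dots> = basis_vec \<phi> - basis_vec (vertex_D m)"
    using cone_D_comp_coface_0[OF \<phi>] cone_D_0_comp_coface_1[of \<phi> m] by (auto intro!: ext)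
  finally show ?thesis .
qed

lemma contracting_homotopy_D:
  "contracting_homotopy obj_D Hom_D (ud_D :: nat \<Rightarrow> (nat \<Rightarrow> nat) \<Rightarrow> 'k::field) hb_D vertex_D"
proof (intro contracting_homotopy.intro contracting_homotopy_axioms.intro finite_hom_category_D)
  show "vertex_D m \<in> Hom_D 0 m" for m
    by (auto simp: vertex_D_def Hom_D_def strict_mono_on_def)
  show "dP obj_D Hom_D ud_D (Suc n) m (hb_D n m \<phi>) + lincomb (Hom_D (n - 1) n) (ud_D n)
      (\<lambda>\<theta>. hb_D (n - 1) m (compose (obj_D (n - 1)) \<phi> \<theta>)) = (basis_vec \<phi> :: _ \<Rightarrow> 'k)"
    if "1 \<le> n" "\<phi> \<in> Hom_D n m" for n m \<phi>
    using hb_D_homotopy_through_0[OF that] hb_D_homotopy_avoiding_0[OF that] by blast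
qed (fact ud_D_comp_ud_D sum_ud_D_1 hb_D_in_Pmod hb_D_homotopy_0)+

section \<open>The semi-cube category\<close>

lemma finite_obj_S: "finite (obj_S n)"
proof -
  have "obj_S n = {xs. set xs \<subseteq> UNIV \<and> length xs = n}" by (auto simp: obj_S_def)
  then show ?thesis using finite_lists_length_eq[of "UNIV :: bool set" n] by simp
qed

lemma coface_S_PiE: "coface_S (Suc m) i e \<in> PiE (obj_S m) (\<lambda>_. obj_S (Suc m))"
  by (auto simp: coface_S_def obj_S_def PiE_iff)

lemma sq_mor_PiE: "sq_mor n m \<phi> \<Longrightarrow> \<phi> \<in> PiE (obj_S n) (\<lambda>_. obj_S m)"
proof (induction rule: sq_mor.induct)
  case (sq_id n)
  then show ?case by auto
next
  case (sq_step n m \<phi> i e)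
  then show ?case using coface_S_PiE[of m i e]
    by (auto simp: compose_def PiE_iff extensional_def)
qed

lemma finite_Hom_S: "finite (Hom_S n m)"
proof -
  have "Hom_S n m \<subseteq> PiE (obj_S n) (\<lambda>_. obj_S m)" using sq_mor_PiE by (auto simp: Hom_S_def)
  then show ?thesis by (rule finite_subset) (simp add: finite_PiE finite_obj_S)
qed

lemma sq_mor_compose: "sq_mor m p \<psi> \<Longrightarrow> sq_mor n m \<phi> \<Longrightarrow> sq_mor n p (compose (obj_S n) \<psi> \<phi>)"
proof (induction arbitrary: \<phi> rule: sq_mor.induct)
  case (sq_id m)
  have "compose (obj_S n) (\<lambda>x\<in>obj_S m. x) \<phi> = \<phi>"
    using sq_mor_PiE[OF sq_id] by (intro Id_compose) (auto simp: PiE_def)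
  then show ?case using sq_id by metis
next
  case (sq_step m p \<psi> i e)
  have "compose (obj_S n) (compose (obj_S m) (coface_S (Suc p) i e) \<psi>) \<phi>
      = compose (obj_S n) (coface_S (Suc p) i e) (compose (obj_S n) \<psi> \<phi>)"
    using sq_mor_PiE[OF sq_step.prems] by (intro compose_assoc[symmetric]) (auto simp: PiE_def)
  then show ?case using sq_step sq_mor.sq_step by metis
qed

lemma finite_hom_category_S: "finite_hom_category obj_S Hom_S"
proof
  show "finite (Hom_S n m)" for n m by (rule finite_Hom_S)
  show "\<phi> \<in> Hom_S n m \<Longrightarrow> \<phi> \<in> PiE (obj_S n) (\<lambda>_. obj_S m)" for \<phi> n m
    by (simp add: Hom_S_def sq_mor_PiE)
  show "(\<lambda>x\<in>obj_S n. x) \<in> Hom_S n n" for n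
    by (simp add: Hom_S_def sq_mor.sq_id)
  show "compose (obj_S n) \<psi> \<phi> \<in> Hom_S n p" if "\<phi> \<in> Hom_S n m" "\<psi> \<in> Hom_S m p" for \<phi> \<psi> n m p
    using that by (simp add: Hom_S_def sq_mor_compose)
qed

interpretation Cube: finite_hom_category obj_S Hom_S by (rule finite_hom_category_S)

lemma coface_S_in_Hom: "1 \<le> i \<Longrightarrow> i \<le> n \<Longrightarrow> coface_S n i e \<in> Hom_S (n - 1) n"
proof -
  assume i: "1 \<le> i" "i \<le> n"
  then obtain k where n: "n = Suc k" by (cases n) auto
  have "sq_mor k (Suc k) (compose (obj_S k) (coface_S (Suc k) i e) (\<lambda>x\<in>obj_S k. x))"
    using i n by (intro sq_mor.sq_step sq_mor.sq_id) auto
  moreover have "compose (obj_S k) (coface_S (Suc k) i e) (\<lambda>x\<in>obj_S k. x) = coface_S (Suc k) i e"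
    using coface_S_PiE[of k i e] by (intro compose_Id) (auto simp: PiE_def)
  ultimately show ?thesis using n by (simp add: Hom_S_def)
qed

lemma sum_ud_S:
  assumes n: "1 \<le> n"
  shows "(\<Sum>\<theta>\<in>Hom_S (n - 1) n. ud_S n \<theta> * G \<theta>) =
    (\<Sum>i=1..n. (-1) ^ (i - 1) * (G (coface_S n i True) - G (coface_S n i False)) :: 'k::field)"
proof -
  have "(\<Sum>\<theta>\<in>Hom_S (n - 1) n. ud_S n \<theta> * G \<theta>)
      = (\<Sum>\<theta>\<in>Hom_S (n - 1) n. \<Sum>i=1..n. (-1) ^ (i - 1) *
          ((if \<theta> = coface_S n i True then G \<theta> else 0) - (if \<theta> = coface_S n i False then G \<theta> else 0)))"
    unfolding ud_S_def sum_distrib_right by (intro sum.cong refl) (auto simp: algebra_simps)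
  also have "\<dots> = (\<Sum>i=1..n. \<Sum>\<theta>\<in>Hom_S (n - 1) n. (-1) ^ (i - 1) *
          ((if \<theta> = coface_S n i True then G \<theta> else 0) - (if \<theta> = coface_S n i False then G \<theta> else 0)))"
    by (rule sum.swap)
  also have "\<dots> = (\<Sum>i=1..n. (-1) ^ (i - 1) * (G (coface_S n i True) - G (coface_S n i False)))"
    using coface_S_in_Hom by (intro sum.cong refl) (simp add: sum_distrib_left[symmetric] sum_subtractf finite_Hom_S)
  finally show ?thesis .
qed

lemma lincomb_ud_S: "lincomb (Hom_S n (Suc n)) (ud_S (Suc n)) V = (\<lambda>x. \<Sum>i=1..Suc n.
    (-1) ^ (i - 1) * (V (coface_S (Suc n) i True) x - V (coface_S (Suc n) i False) x) :: 'k::field)"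
  unfolding lincomb_def by (rule ext) (rule sum_ud_S[of "Suc n", unfolded diff_Suc_1], simp)

lemma insert_insert_commute:
  assumes ij: "i \<le> j" "j \<le> length x"
  shows "take i (take j x @ b # drop j x) @ a # drop i (take j x @ b # drop j x) =
  take (Suc j) (take i x @ a # drop i x) @ b # drop (Suc j) (take i x @ a # drop i x)"
proof -
  have lj: "length (take j x) = j" and li: "length (take i x) = i" using ij by auto
  have 1: "take i (take j x @ b # drop j x) = take i x" using ij lj by (simp add: take_append min_def)
  have 2: "drop i (take j x @ b # drop j x) = take (j - i) (drop i x) @ b # drop j x"
    using ij lj by (simp add: drop_append drop_take)
  have 3: "take (Suc j) (take i x @ a # drop i x) = take i x @ a # take (j - i) (drop i x)"
    using ij li by (simp add: take_append Suc_diff_le)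
  have 4: "drop (Suc j) (take i x @ a # drop i x) = drop j x"
    using ij li by (simp add: drop_append Suc_diff_le)
  show ?thesis unfolding 1 2 3 4 by simp
qed

lemma coface_S_comp_coface_S: "1 \<le> i \<Longrightarrow> i \<le> j \<Longrightarrow> j \<le> n \<Longrightarrow>
  compose (obj_S (n - 1)) (coface_S (Suc n) i e) (coface_S n j h) =
  compose (obj_S (n - 1)) (coface_S (Suc n) (Suc j) h) (coface_S n i e)"
proof (rule ext)
  fix x assume ij: "1 \<le> i" "i \<le> j" "j \<le> n"
  show "compose (obj_S (n - 1)) (coface_S (Suc n) i e) (coface_S n j h) x =
    compose (obj_S (n - 1)) (coface_S (Suc n) (Suc j) h) (coface_S n i e) x"
  proof (cases "x \<in> obj_S (n - 1)")
    case True
    then have l: "length x = n - 1" by (simp add: obj_S_def)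
    have "coface_S n j h x \<in> obj_S n" "coface_S n i e x \<in> obj_S n" using True ij l
      by (auto simp: coface_S_def obj_S_def)
    then show ?thesis using True ij l insert_insert_commute[of "i - 1" "j - 1" x h e]
      by (simp add: compose_def coface_S_def obj_S_def)
  qed (simp add: compose_def)
qed


lemma ud_S_comp_ud_S:
  assumes n1: "1 \<le> n"
  shows "(\<Sum>\<theta>\<in>Hom_S n (Suc n). \<Sum>\<theta>'\<in>Hom_S (n - 1) n.
     ud_S (Suc n) \<theta> * ud_S n \<theta>' * F (compose (obj_S (n - 1)) \<theta> \<theta>')) = (0 :: 'k::field)"
proof -
  define s :: "nat \<Rightarrow> 'k" where "s i = (-1) ^ (i - 1)" for i
  define C where "C i e j h = F (compose (obj_S (n - 1)) (coface_S (Suc n) i e) (coface_S n j h))" for i e j h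
  have u: "(\<Sum>\<theta>\<in>Hom_S (Suc n - 1) (Suc n). ud_S (Suc n) \<theta> * H \<theta>) =
    (\<Sum>i=1..Suc n. s i * (H (coface_S (Suc n) i True) - H (coface_S (Suc n) i False)) :: 'k)" for H
    unfolding s_def by (rule sum_ud_S) simp
  have "(\<Sum>\<theta>\<in>Hom_S n (Suc n). \<Sum>\<theta>'\<in>Hom_S (n - 1) n.
     ud_S (Suc n) \<theta> * ud_S n \<theta>' * F (compose (obj_S (n - 1)) \<theta> \<theta>'))
    = (\<Sum>\<theta>\<in>Hom_S (Suc n - 1) (Suc n). ud_S (Suc n) \<theta> * (\<Sum>\<theta>'\<in>Hom_S (n - 1) n.
          ud_S n \<theta>' * F (compose (obj_S (n - 1)) \<theta> \<theta>')))"
    by (simp add: sum_distrib_left mult.assoc)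
  also have "\<dots> = (\<Sum>i=1..Suc n. s i * ((\<Sum>j=1..n. s j * (C i True j True - C i True j False))
        - (\<Sum>j=1..n. s j * (C i False j True - C i False j False))))"
    unfolding sum_ud_S[OF n1] u C_def s_def ..
  also have "\<dots> = (\<Sum>i=1..Suc n. \<Sum>j=1..n. s i * (s j * ((C i True j True - C i True j False)
        - (C i False j True - C i False j False))))"
    by (simp add: sum_distrib_left sum_subtractf[symmetric] algebra_simps)
  also have "\<dots> = 0"
  proof (rule double_sum_cancel_pairs)
    fix i j assume ij: "1 \<le> i" "i \<le> j" "j \<le> n"
    then obtain j' where j: "j = Suc j'" by (cases j) auto
    have e: "C i e j h = C (Suc j) h i e" for e h
      unfolding C_def using coface_S_comp_coface_S[OF ij] by simp
    show "s i * (s j * ((C i True j True - C i True j False) - (C i False j True - C i False j False))) =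
      - (s (Suc j) * (s i * ((C (Suc j) True i True - C (Suc j) True i False) -
          (C (Suc j) False i True - C (Suc j) False i False))))"
      unfolding e unfolding s_def j by (simp add: algebra_simps)
  qed
  finally show ?thesis .
qed

lemma sum_ud_S_1: "(\<Sum>\<theta>\<in>Hom_S 0 1. ud_S 1 \<theta>) = (0::'k::field)"
proof -
  have "(\<Sum>\<theta>\<in>Hom_S (1 - 1) 1. ud_S 1 \<theta> * (\<lambda>_. 1::'k) \<theta>) = 0"
    by (subst sum_ud_S) simp_all
  then show ?thesis by simp
qed


section \<open>Cube morphisms as words\<close>

text \<open>A word of length \<open>m\<close> over \<open>bool option\<close> (\<open>None\<close> is the star \<open>*\<close>) with \<open>n\<close> stars
  encodes the map \<open>\<box>\<^sub>n \<rightarrow> \<box>\<^sub>m\<close> that fills the stars, from left to right, with the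
  coordinates of its argument; \<open>word_subst w v\<close> encodes the composite of \<open>w\<close> after \<open>v\<close>.\<close>

fun fill_word :: "bool option list \<Rightarrow> bool list \<Rightarrow> bool list" where
  "fill_word [] x = []"
| "fill_word (None # w) x = hd x # fill_word w (tl x)"
| "fill_word (Some b # w) x = b # fill_word w x"

fun stars :: "bool option list \<Rightarrow> nat" where
  "stars [] = 0"
| "stars (None # w) = Suc (stars w)"
| "stars (Some b # w) = stars w"

fun word_subst :: "bool option list \<Rightarrow> bool option list \<Rightarrow> bool option list" where
  "word_subst [] v = []"
| "word_subst (None # w) v = hd v # word_subst w (tl v)"
| "word_subst (Some b # w) v = Some b # word_subst w v"

definition word_map :: "bool option list \<Rightarrow> bool list \<Rightarrow> bool list" where
  "word_map w = (\<lambda>x\<in>obj_S (stars w). fill_word w x)"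

definition coface_word :: "nat \<Rightarrow> nat \<Rightarrow> bool \<Rightarrow> bool option list" where
  "coface_word n i e = replicate (i - 1) None @ Some e # replicate (n - i) None"

lemma length_fill_word[simp]: "length (fill_word w x) = length w"
  by (induction w x rule: fill_word.induct) auto

lemma length_word_subst[simp]: "length (word_subst w v) = length w"
  by (induction w v rule: word_subst.induct) auto

lemma stars_word_subst: "length v = stars w \<Longrightarrow> stars (word_subst w v) = stars v"
proof (induction w v rule: word_subst.induct)
  case (2 w v)
  then obtain a v' where v: "v = a # v'" by (cases v) auto
  then show ?case using 2 by (cases a) auto
qed auto

lemma fill_word_subst: "length v = stars w \<Longrightarrow> fill_word (word_subst w v) x = fill_word w (fill_word v x)"
proof (induction w arbitrary: v x)
  case (Cons a w)
  show ?case
  proof (cases a)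
    case None
    then obtain b v' where v: "v = b # v'" using Cons.prems by (cases v) auto
    then show ?thesis using Cons None by (cases b) auto
  next
    case (Some c)
    then show ?thesis using Cons by auto
  qed
qed simp

lemma fill_word_replicate_None_append:
  "k \<le> length x \<Longrightarrow> fill_word (replicate k None @ u) x = take k x @ fill_word u (drop k x)"
proof (induction k arbitrary: x)
  case (Suc k)
  then obtain a x' where "x = a # x'" by (cases x) auto
  then show ?case using Suc by auto
qed simp

lemma fill_word_replicate_None: "length y = l \<Longrightarrow> fill_word (replicate l None) y = y"
  using fill_word_replicate_None_append[of l y "[]"] by simp

lemma stars_append[simp]: "stars (u @ v) = stars u + stars v"
  by (induction u rule: stars.induct) auto

lemma stars_replicate_None[simp]: "stars (replicate k None) = k"
  by (induction k) auto

lemma stars_replicate_Some[simp]: "stars (replicate k (Some b)) = 0"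
  by (induction k) auto

lemma stars_coface_word: "1 \<le> i \<Longrightarrow> i \<le> n \<Longrightarrow> stars (coface_word n i e) = n - 1"
  by (simp add: coface_word_def)

lemma length_coface_word: "1 \<le> i \<Longrightarrow> i \<le> n \<Longrightarrow> length (coface_word n i e) = n"
  by (simp add: coface_word_def)

lemma word_map_coface_word: "1 \<le> i \<Longrightarrow> i \<le> n \<Longrightarrow> word_map (coface_word n i e) = coface_S n i e"
proof (rule ext)
  fix x assume i: "1 \<le> i" "i \<le> n"
  show "word_map (coface_word n i e) x = coface_S n i e x"
  proof (cases "length x = n - 1")
    case True
    have "fill_word (coface_word n i e) x = take (i - 1) x @ e # drop (i - 1) x"
      unfolding coface_word_def using i True by (simp add: fill_word_replicate_None_append fill_word_replicate_None)
    then show ?thesis using i True by (simp add: word_map_def stars_coface_word coface_S_def obj_S_def)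
  next
    case False
    then show ?thesis using i by (simp add: word_map_def stars_coface_word coface_S_def obj_S_def)
  qed
qed

lemma word_map_replicate_None: "word_map (replicate n None) = (\<lambda>x\<in>obj_S n. x)"
  by (rule ext) (simp add: word_map_def fill_word_replicate_None obj_S_def)

lemma compose_word_map: "length v = stars w \<Longrightarrow>
    compose (obj_S (stars v)) (word_map w) (word_map v) = word_map (word_subst w v)"
proof (rule ext)
  fix x assume l: "length v = stars w"
  show "compose (obj_S (stars v)) (word_map w) (word_map v) x = word_map (word_subst w v) x"
    using l by (simp add: compose_def word_map_def stars_word_subst fill_word_subst obj_S_def)
qed

lemma word_subst_replicate_None_append:
  "k \<le> length v \<Longrightarrow> word_subst (replicate k None @ u) v = take k v @ word_subst u (drop k v)"
proof (induction k arbitrary: v)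
  case (Suc k)
  then obtain a v' where "v = a # v'" by (cases v) auto
  then show ?case using Suc by auto
qed simp

lemma word_subst_replicate_None: "length v = l \<Longrightarrow> word_subst (replicate l None) v = v"
  using word_subst_replicate_None_append[of l v "[]"] by simp

lemma word_subst_coface_word: "1 \<le> i \<Longrightarrow> i \<le> n \<Longrightarrow> length v = n - 1 \<Longrightarrow>
  word_subst (coface_word n i e) v = take (i - 1) v @ Some e # drop (i - 1) v"
  unfolding coface_word_def by (simp add: word_subst_replicate_None_append word_subst_replicate_None)

lemma word_subst_replicate_None_right: "word_subst w (replicate (stars w) None) = w"
  by (induction w rule: stars.induct) auto


lemma word_map_insert:
  assumes "length v = m" "p \<le> m"
  shows "word_map (take p v @ Some e # drop p v) =
    compose (obj_S (stars v)) (coface_S (Suc m) (Suc p) e) (word_map v)"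
proof -
  have "compose (obj_S (stars v)) (coface_S (Suc m) (Suc p) e) (word_map v)
      = compose (obj_S (stars v)) (word_map (coface_word (Suc m) (Suc p) e)) (word_map v)"
    using assms by (simp add: word_map_coface_word)
  also have "\<dots> = word_map (word_subst (coface_word (Suc m) (Suc p) e) v)"
    using assms by (intro compose_word_map) (simp add: stars_coface_word)
  finally show ?thesis using assms by (simp add: word_subst_coface_word)
qed

lemma sq_mor_imp_word_map: "sq_mor n m \<phi> \<Longrightarrow> \<exists>w. length w = m \<and> stars w = n \<and> \<phi> = word_map w"
proof (induction rule: sq_mor.induct)
  case (sq_id n)
  then show ?case using word_map_replicate_None[of n] by (intro exI[of _ "replicate n None"]) simp
next
  case (sq_step n m \<phi> i e)
  then obtain w where w: "length w = m" "stars w = n" "\<phi> = word_map w" by auto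
  obtain p where p: "i = Suc p" "p \<le> m" using sq_step by (cases i) auto
  have "stars (take p w @ Some e # drop p w) = stars w"
    by (metis append_take_drop_id stars.simps(3) stars_append)
  then show ?case
    using word_map_insert[OF w(1) p(2), of e] w p
    by (intro exI[of _ "take p w @ Some e # drop p w"]) auto
qed

lemma sq_mor_word_map: "length w = m \<Longrightarrow> sq_mor (stars w) m (word_map w)"
proof (induction m arbitrary: w)
  case 0
  then have "w = []" by simp
  then show ?case using word_map_replicate_None[of 0] sq_mor.sq_id[of 0] by (metis stars.simps(1) replicate_0)
next
  case (Suc m)
  show ?case
  proof (cases "\<forall>a\<in>set w. a = None")
    case True
    then have "w = replicate (Suc m) None" using Suc.prems by (intro replicate_eqI) auto
    moreover have "stars (replicate (Suc m) None) = Suc m" by simp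
    ultimately show ?thesis using word_map_replicate_None[of "Suc m"] sq_mor.sq_id[of "Suc m"] by metis
  next
    case False
    then obtain p e where p: "p < length w" "w ! p = Some e"
      by (metis in_set_conv_nth not_None_eq)
    define v where "v = take p w @ drop (Suc p) w"
    have w: "w = take p v @ Some e # drop p v"
      using p id_take_nth_drop[OF p(1)] by (simp add: v_def min_def)
    have "stars w = stars v"
      using stars_append[of "take p v" "drop p v"] by (subst w) simp
    moreover have "length v = m" using Suc.prems p by (simp add: v_def)
    ultimately have v: "length v = m" "stars v = stars w" by simp_all
    have "sq_mor (stars v) (Suc m) (compose (obj_S (stars v)) (coface_S (Suc m) (Suc p) e) (word_map v))"
      using Suc.IH[OF v(1)] p Suc.prems by (intro sq_mor.sq_step) auto
    then show ?thesis using word_map_insert[OF v(1), of p e] p Suc.prems v w by simp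
  qed
qed

lemma Hom_S_iff_word_map: "\<phi> \<in> Hom_S n m \<longleftrightarrow> (\<exists>w. length w = m \<and> stars w = n \<and> \<phi> = word_map w)"
  unfolding Hom_S_def using sq_mor_imp_word_map sq_mor_word_map by blast

text \<open>A word is recovered from the images of the two constant cubes \<open>(0, \<dots>, 0)\<close> and
  \<open>(1, \<dots>, 1)\<close>: its letter at a position is \<open>*\<close> exactly where these images differ.\<close>

lemma nth_fill_word_replicate:
  "p < length w \<Longrightarrow> fill_word w (replicate (stars w) b) ! p = (case w ! p of None \<Rightarrow> b | Some c \<Rightarrow> c)"
proof (induction w arbitrary: p)
  case (Cons a w)
  then show ?case by (cases a; cases p) auto
qed simp

lemma word_map_inj:
  assumes l: "length w = length w'" and s: "stars w = stars w'" and eq: "word_map w = word_map w'"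
  shows "w = w'"
proof (rule nth_equalityI[OF l])
  fix p assume p: "p < length w"
  have "fill_word w (replicate (stars w) b) = fill_word w' (replicate (stars w) b)" for b
    using fun_cong[OF eq, of "replicate (stars w) b"] s by (simp add: word_map_def obj_S_def)
  then have "(case w ! p of None \<Rightarrow> b | Some c \<Rightarrow> c) = (case w' ! p of None \<Rightarrow> b | Some c \<Rightarrow> c)" for b
    using nth_fill_word_replicate[OF p, of b] nth_fill_word_replicate[of p w' b] p l s by simp
  from this[of True] this[of False] show "w ! p = w' ! p" by (auto split: option.splits)
qed


definition word_cons :: "bool option \<Rightarrow> (bool option list \<Rightarrow> 'k::field) \<Rightarrow> bool option list \<Rightarrow> 'k" where
  "word_cons a X = (\<lambda>u. case u of [] \<Rightarrow> 0 | b # u' \<Rightarrow> if b = a then X u' else 0)"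

definition words :: "nat \<Rightarrow> bool option list set" where "words m = {w. length w = m}"

definition lin_ext :: "nat \<Rightarrow> (bool option list \<Rightarrow> 'b \<Rightarrow> 'k) \<Rightarrow> (bool option list \<Rightarrow> 'k::field) \<Rightarrow> 'b \<Rightarrow> 'k" where
  "lin_ext m T X = (\<lambda>u. \<Sum>w\<in>words m. X w * T w u)"

definition d_word :: "bool option list \<Rightarrow> bool option list \<Rightarrow> 'k::field" where
  "d_word w = (\<lambda>u. \<Sum>i=1..stars w. (-1) ^ (i - 1) *
      (basis_vec (word_subst w (coface_word (stars w) i True)) u -
       basis_vec (word_subst w (coface_word (stars w) i False)) u))"

fun h_word :: "bool option list \<Rightarrow> bool option list \<Rightarrow> 'k::field" where
  "h_word [] = 0"
| "h_word (None # w) = 0"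
| "h_word (Some True # w) = basis_vec (None # w) + word_cons (Some False) (h_word w)"
| "h_word (Some False # w) = word_cons (Some False) (h_word w)"

lemma sum_basis_vec_mult: "finite A \<Longrightarrow> (\<Sum>w\<in>A. basis_vec u w * f w) = (if u \<in> A then f u else (0::'k::field))"
  by (simp add: basis_vec_def)

lemma finite_words: "finite (words m)"
proof -
  have "words m = {xs. set xs \<subseteq> UNIV \<and> length xs = m}" by (auto simp: words_def)
  then show ?thesis using finite_lists_length_eq[of "UNIV :: bool option set" m] by simp
qed

lemma words_iff: "u \<in> words m \<longleftrightarrow> length u = m"
  by (simp add: words_def)

lemma word_cons_basis_vec: "word_cons a (basis_vec u) = basis_vec (a # u)"
  by (rule ext) (auto simp: word_cons_def basis_vec_def split: list.split)

lemma word_cons_add: "word_cons a (X + Y) = word_cons a X + word_cons a Y"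
  by (rule ext) (auto simp: word_cons_def split: list.split)

lemma word_cons_diff: "word_cons a (X - Y) = word_cons a X - word_cons a Y"
  by (rule ext) (auto simp: word_cons_def split: list.split)

lemma word_cons_zero: "word_cons a 0 = 0"
  by (rule ext) (auto simp: word_cons_def split: list.split)

lemma coface_word_Suc: "1 \<le> i \<Longrightarrow> coface_word (Suc n) (Suc i) e = None # coface_word n i e"
  by (cases i) (auto simp: coface_word_def)

lemma d_word_Nil: "d_word [] = 0"
  by (rule ext) (simp add: d_word_def)

lemma word_cons_d_word: "word_cons a (d_word w) = (\<lambda>u. \<Sum>i=1..stars w. (-1) ^ (i - 1) *
    (basis_vec (a # word_subst w (coface_word (stars w) i True)) u -
     basis_vec (a # word_subst w (coface_word (stars w) i False)) u))"
  by (rule ext) (auto simp: word_cons_def d_word_def basis_vec_def split: list.split)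

lemma d_word_Some: "d_word (Some b # w) = word_cons (Some b) (d_word w)"
  unfolding word_cons_d_word by (simp add: d_word_def)

lemma d_word_None:
  "d_word (None # w) =
    basis_vec (Some True # w) - basis_vec (Some False # w) - (word_cons None (d_word w) :: _ \<Rightarrow> 'k::field)"
proof (rule ext)
  fix u
  let ?n = "stars w"
  let ?t = "\<lambda>i e. basis_vec (word_subst (None # w) (coface_word (Suc ?n) i e)) u :: 'k"
  have "d_word (None # w) u = (?t 1 True - ?t 1 False) + (\<Sum>i=Suc 1..Suc ?n. (-1) ^ (i - 1) * (?t i True - ?t i False))"
    unfolding d_word_def by (subst sum.atLeast_Suc_atMost) simp_all
  also have "(\<Sum>i=Suc 1..Suc ?n. (-1) ^ (i - 1) * (?t i True - ?t i False)) =
      (\<Sum>i=1..?n. - ((-1) ^ (i - 1) * (basis_vec (None # word_subst w (coface_word ?n i True)) u -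
        basis_vec (None # word_subst w (coface_word ?n i False)) u)))"
    unfolding sum.shift_bounds_cl_Suc_ivl
  proof (intro sum.cong refl)
    fix i assume "i \<in> {1..?n}"
    then obtain j where "i = Suc j" by (cases i) auto
    then show "(-1) ^ (Suc i - 1) * (?t (Suc i) True - ?t (Suc i) False) =
        - ((-1) ^ (i - 1) * (basis_vec (None # word_subst w (coface_word ?n i True)) u -
          basis_vec (None # word_subst w (coface_word ?n i False)) u))"
      by (simp add: coface_word_Suc)
  qed
  also have "\<dots> = - word_cons None (d_word w) u"
    by (simp add: word_cons_d_word sum_negf)
  also have "?t 1 True - ?t 1 False = basis_vec (Some True # w) u - basis_vec (Some False # w) u"
    by (simp add: coface_word_def word_subst_replicate_None_right)
  finally show "(d_word (None # w) u :: 'k) =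
      (basis_vec (Some True # w) - basis_vec (Some False # w) - word_cons None (d_word w)) u"
    by simp
qed

lemma d_word_support: "(d_word w u :: 'k::field) \<noteq> 0 \<Longrightarrow> length u = length w \<and> stars u = stars w - 1"
proof -
  assume H: "(d_word w u :: 'k) \<noteq> 0"
  define p where "p e i = word_subst w (coface_word (stars w) i e)" for e i
  have "(\<Sum>i=1..stars w. (-1) ^ (i - 1) * (basis_vec (p True i) u - basis_vec (p False i) u)) \<noteq> (0::'k)"
    using H unfolding d_word_def p_def .
  then obtain i where i: "i \<in> {1..stars w}" and
    t0: "(-1) ^ (i - 1) * (basis_vec (p True i) u - basis_vec (p False i) u) \<noteq> (0::'k)"
    by (rule sum.not_neutral_contains_not_neutral)
  have "u = p True i \<or> u = p False i"
  proof (rule ccontr)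
    assume "\<not> (u = p True i \<or> u = p False i)"
    then have "basis_vec (p True i) u = (0::'k)" "basis_vec (p False i) u = (0::'k)" by (auto simp: basis_vec_def)
    then show False using t0 by simp
  qed
  then obtain e where "u = word_subst w (coface_word (stars w) i e)" unfolding p_def by blast
  then show ?thesis using i by (simp add: stars_word_subst stars_coface_word length_coface_word)
qed

lemma h_word_support: "h_word w u \<noteq> 0 \<Longrightarrow> length u = length w \<and> stars u = Suc (stars w)"
proof (induction w arbitrary: u rule: h_word.induct)
  case (3 w)
  then show ?case by (auto simp: basis_vec_def word_cons_def split: list.splits if_splits)
next
  case (4 w)
  then show ?case by (auto simp: word_cons_def split: list.splits if_splits)
qed auto

lemma lin_ext_basis_vec: "length u = m \<Longrightarrow> lin_ext m T (basis_vec u) = T u"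
  by (rule ext) (simp add: lin_ext_def sum_basis_vec_mult finite_words words_iff)

lemma lin_ext_add: "lin_ext m T (X + Y) = lin_ext m T X + lin_ext m T Y"
  by (rule ext) (simp add: lin_ext_def algebra_simps sum.distrib)

lemma lin_ext_diff: "lin_ext m T (X - Y) = lin_ext m T X - lin_ext m T Y"
  by (rule ext) (simp add: lin_ext_def algebra_simps sum_subtractf)

lemma lin_ext_zero: "lin_ext m T 0 = 0"
  by (rule ext) (simp add: lin_ext_def)

lemma lin_ext_zero_kernel: "lin_ext m (\<lambda>_. 0) X = 0"
  by (rule ext) (simp add: lin_ext_def)

lemma lin_ext_add_kernel: "lin_ext m (\<lambda>w. T1 w + T2 w) X = lin_ext m T1 X + lin_ext m T2 X"
  by (rule ext) (simp add: lin_ext_def algebra_simps sum.distrib)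

lemma lin_ext_alternating_sum: "lin_ext m T (\<lambda>u. \<Sum>i\<in>I. a i * (A i u - B i u)) =
    (\<lambda>x. \<Sum>i\<in>I. a i * (lin_ext m T (A i) x - lin_ext m T (B i) x))"
  by (rule ext)
    (simp add: lin_ext_def sum_distrib_right sum_distrib_left sum.swap[of _ "words m"] algebra_simps sum_subtractf)

lemma sum_words_Suc: "(\<Sum>w\<in>words (Suc m). F w) = (\<Sum>v\<in>words m. \<Sum>b\<in>UNIV. F (b # v))"
proof -
  have e: "words (Suc m) = (\<lambda>(b, v). b # v) ` (UNIV \<times> words m)"
    by (auto simp: words_def image_iff length_Suc_conv)
  have i: "inj_on (\<lambda>(b, v). b # v) (UNIV \<times> words m)" by (auto simp: inj_on_def)
  have "(\<Sum>w\<in>words (Suc m). F w) = (\<Sum>p\<in>UNIV \<times> words m. F (fst p # snd p))"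
    unfolding e by (subst sum.reindex[OF i]) (auto intro!: sum.cong)
  also have "\<dots> = (\<Sum>b\<in>UNIV. \<Sum>v\<in>words m. F (b # v))"
    by (simp add: sum.cartesian_product split_def)
  also have "\<dots> = (\<Sum>v\<in>words m. \<Sum>b\<in>UNIV. F (b # v))" by (rule sum.swap)
  finally show ?thesis .
qed

lemma lin_ext_word_cons: "lin_ext (Suc m) T (word_cons a X) = lin_ext m (\<lambda>w. T (a # w)) X"
proof (rule ext)
  fix u
  have "lin_ext (Suc m) T (word_cons a X) u = (\<Sum>v\<in>words m. \<Sum>b\<in>UNIV. word_cons a X (b # v) * T (b # v) u)"
    by (simp add: lin_ext_def sum_words_Suc)
  also have "\<dots> = (\<Sum>v\<in>words m. X v * T (a # v) u)"
    by (intro sum.cong refl) (simp add: word_cons_def if_distrib[of "\<lambda>y. y * _"] cong: if_cong)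
  finally show "lin_ext (Suc m) T (word_cons a X) u = lin_ext m (\<lambda>w. T (a # w)) X u" by (simp add: lin_ext_def)
qed

lemma lin_ext_word_cons_kernel: "lin_ext m (\<lambda>w. word_cons a (T w)) X = word_cons a (lin_ext m T X)"
  by (rule ext) (auto simp: lin_ext_def word_cons_def split: list.split)

lemma lin_ext_basis_vec_Cons: "(\<forall>w. X w \<noteq> 0 \<longrightarrow> length w = m) \<Longrightarrow> lin_ext m (\<lambda>w. basis_vec (a # w)) X = word_cons a X"
proof (rule ext)
  fix u assume X: "\<forall>w. X w \<noteq> 0 \<longrightarrow> length w = m"
  show "lin_ext m (\<lambda>w. basis_vec (a # w)) X u = word_cons a X u"
  proof (cases u)
    case Nil
    then show ?thesis by (simp add: lin_ext_def word_cons_def basis_vec_def)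
  next
    case (Cons b u')
    have "lin_ext m (\<lambda>w. basis_vec (a # w)) X u = (\<Sum>w\<in>words m. if w = u' then (if b = a then X w else 0) else 0)"
      using Cons by (auto simp: lin_ext_def basis_vec_def intro!: sum.cong)
    also have "\<dots> = (if u' \<in> words m then (if b = a then X u' else 0) else 0)"
      by (simp add: finite_words)
    also have "\<dots> = word_cons a X u" using Cons X by (auto simp: word_cons_def words_def)
    finally show ?thesis .
  qed
qed

lemma d_word_support_length: "\<forall>u. d_word w u \<noteq> 0 \<longrightarrow> length u = length w"
  using d_word_support by blast

text \<open>The correction term in degree 0: a word without stars is a vertex of the cube, and
  \<open>h_word\<close> contracts every vertex onto \<open>(0, \<dots>, 0)\<close>.\<close>

definition vertex_part :: "bool option list \<Rightarrow> bool option list \<Rightarrow> 'k::field" where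
  "vertex_part w = (if stars w = 0 then basis_vec (replicate (length w) (Some False)) else 0)"

lemma word_cons_vertex_part: "word_cons (Some False) (vertex_part w) = vertex_part (Some b # w)"
  by (simp add: vertex_part_def word_cons_basis_vec word_cons_zero)

lemma lin_ext_d_word_word_cons:
  "lin_ext (Suc m) d_word (word_cons (Some b) X) = word_cons (Some b) (lin_ext m d_word X)"
  by (simp add: lin_ext_word_cons d_word_Some lin_ext_word_cons_kernel)

lemma lin_ext_h_word_word_cons_False:
  "lin_ext (Suc m) h_word (word_cons (Some False) X) = word_cons (Some False) (lin_ext m h_word X)"
  by (simp add: lin_ext_word_cons lin_ext_word_cons_kernel)

lemma d_word_h_word: "lin_ext (length w) d_word (h_word w) + lin_ext (length w) h_word (d_word w) =
    basis_vec w - (vertex_part w :: _ \<Rightarrow> 'k::field)"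
proof (induction w rule: h_word.induct)
  case 1
  then show ?case by (rule ext) (simp add: d_word_Nil lin_ext_def vertex_part_def basis_vec_def)
next
  case (2 w)
  have "lin_ext (Suc (length w)) h_word (d_word (None # w)) = (basis_vec (None # w) :: _ \<Rightarrow> 'k)"
    by (rule ext) (simp add: d_word_None lin_ext_diff lin_ext_basis_vec lin_ext_word_cons lin_ext_zero_kernel)
  then show ?case by (auto intro!: ext simp: lin_ext_def vertex_part_def)
next
  case (3 w)
  let ?dh = "word_cons (Some False) (lin_ext (length w) d_word (h_word w)) :: _ \<Rightarrow> 'k"
  let ?hd = "word_cons (Some False) (lin_ext (length w) h_word (d_word w)) :: _ \<Rightarrow> 'k"
  have dh: "lin_ext (Suc (length w)) d_word (h_word (Some True # w)) = d_word (None # w) + ?dh"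
    by (simp add: lin_ext_add lin_ext_basis_vec lin_ext_d_word_word_cons)
  have hd: "lin_ext (Suc (length w)) h_word (d_word (Some True # w)) = word_cons None (d_word w) + ?hd"
    by (simp add: d_word_Some lin_ext_word_cons lin_ext_add_kernel
        lin_ext_basis_vec_Cons[OF d_word_support_length] lin_ext_word_cons_kernel)
  have "d_word (None # w) + ?dh + (word_cons None (d_word w) + ?hd)
      = basis_vec (Some True # w) - basis_vec (Some False # w) + (?dh + ?hd)"
    unfolding d_word_None by (simp add: algebra_simps)
  also have "?dh + ?hd = basis_vec (Some False # w) - vertex_part (Some True # w)"
    unfolding word_cons_add[symmetric] 3 by (simp add: word_cons_vertex_part word_cons_diff word_cons_basis_vec)
  finally show ?case unfolding length_Cons dh hd by (simp add: algebra_simps)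
next
  case (4 w)
  have "lin_ext (Suc (length w)) d_word (h_word (Some False # w)) +
      lin_ext (Suc (length w)) h_word (d_word (Some False # w))
      = word_cons (Some False) (lin_ext (length w) d_word (h_word w) + lin_ext (length w) h_word (d_word w))"
    by (simp add: d_word_Some lin_ext_d_word_word_cons lin_ext_h_word_word_cons_False word_cons_add)
  also have "\<dots> = basis_vec (Some False # w) - (vertex_part (Some False # w) :: _ \<Rightarrow> 'k)"
    unfolding 4 by (simp add: word_cons_vertex_part word_cons_diff word_cons_basis_vec)
  finally show ?case by simp
qed


text \<open>By \<open>Hom_S_iff_word_map\<close> and \<open>word_map_inj\<close>, \<open>chain_of_words m\<close> is a linear isomorphism from
  functions on words of length \<open>m\<close> with \<open>n\<close> stars onto \<open>P\<^sub>n(m)\<close>.\<close>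

definition chain_of_words :: "nat \<Rightarrow> (bool option list \<Rightarrow> 'k) \<Rightarrow> (bool list \<Rightarrow> bool list) \<Rightarrow> 'k::field" where
  "chain_of_words m = lin_ext m (\<lambda>w. basis_vec (word_map w))"

lemma chain_of_words_eq_lincomb: "chain_of_words m X = lincomb (words m) X (\<lambda>w. basis_vec (word_map w))"
  by (simp add: chain_of_words_def lin_ext_def lincomb_def)

lemma chain_of_words_lin_ext: "chain_of_words m (lin_ext m T X) = lincomb (words m) X (\<lambda>v. chain_of_words m (T v))"
proof (rule ext)
  fix \<phi>
  have "chain_of_words m (lin_ext m T X) \<phi> =
      (\<Sum>u\<in>words m. \<Sum>v\<in>words m. X v * (T v u * basis_vec (word_map u) \<phi>))"
    unfolding chain_of_words_def lin_ext_def sum_distrib_right mult.assoc ..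
  also have "\<dots> = lincomb (words m) X (\<lambda>v. chain_of_words m (T v)) \<phi>"
    unfolding chain_of_words_def lin_ext_def lincomb_def sum_distrib_left by (rule sum.swap)
  finally show "chain_of_words m (lin_ext m T X) \<phi> = lincomb (words m) X (\<lambda>v. chain_of_words m (T v)) \<phi>" .
qed

lemma chain_of_words_in_Pmod: "(\<forall>v. X v \<noteq> 0 \<longrightarrow> length v = m \<and> stars v = k) \<Longrightarrow> chain_of_words m X \<in> Pmod Hom_S k m"
proof (unfold Cube.Pmod_iff, intro allI impI)
  fix \<phi> assume X: "\<forall>v. X v \<noteq> 0 \<longrightarrow> length v = m \<and> stars v = k" and "chain_of_words m X \<phi> \<noteq> 0"
  then obtain v where "v \<in> words m" "X v * basis_vec (word_map v) \<phi> \<noteq> 0"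
    unfolding chain_of_words_def lin_ext_def by (meson sum.not_neutral_contains_not_neutral)
  then have "X v \<noteq> 0" "\<phi> = word_map v" by (auto simp: basis_vec_def split: if_splits)
  then show "\<phi> \<in> Hom_S k m" using X Hom_S_iff_word_map by blast
qed

lemma word_map_comp_coface_S: "stars w = Suc n \<Longrightarrow> 1 \<le> i \<Longrightarrow> i \<le> Suc n \<Longrightarrow>
    compose (obj_S n) (word_map w) (coface_S (Suc n) i e) = word_map (word_subst w (coface_word (Suc n) i e))"
  using compose_word_map[of "coface_word (Suc n) i e" w]
  by (simp add: word_map_coface_word[symmetric] stars_coface_word length_coface_word)

lemma dP_basis_vec_word_map:
  assumes v: "length v = m" "stars v = Suc k"
  shows "dP obj_S Hom_S ud_S (Suc k) m (basis_vec (word_map v)) = (chain_of_words m (d_word v) :: _ \<Rightarrow> 'k::field)"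
proof -
  have "word_map v \<in> Hom_S (Suc k) m" using v Hom_S_iff_word_map by blast
  then have "dP obj_S Hom_S ud_S (Suc k) m (basis_vec (word_map v)) = (\<lambda>x. \<Sum>i=1..Suc k. (-1) ^ (i - 1) *
      (basis_vec (word_map (word_subst v (coface_word (Suc k) i True))) x -
       basis_vec (word_map (word_subst v (coface_word (Suc k) i False))) x) :: 'k)"
    unfolding Cube.dP_basis_vec[OF \<open>word_map v \<in> Hom_S (Suc k) m\<close>] diff_Suc_1 lincomb_ud_S
    using v by (intro ext sum.cong refl) (simp add: word_map_comp_coface_S)
  also have "\<dots> = chain_of_words m (d_word v)"
    unfolding d_word_def v(2) chain_of_words_def lin_ext_alternating_sum
    using v(1) by (intro ext sum.cong refl) (simp add: lin_ext_basis_vec)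
  finally show ?thesis .
qed

lemma dP_chain_of_words:
  assumes X: "\<forall>v. X v \<noteq> 0 \<longrightarrow> length v = m \<and> stars v = Suc k"
  shows "dP obj_S Hom_S ud_S (Suc k) m (chain_of_words m X) = (chain_of_words m (lin_ext m d_word X) :: _ \<Rightarrow> 'k::field)"
proof -
  have "dP obj_S Hom_S ud_S (Suc k) m (chain_of_words m X)
      = lincomb (words m) X (\<lambda>w. dP obj_S Hom_S ud_S (Suc k) m (basis_vec (word_map w)))"
    unfolding chain_of_words_eq_lincomb Cube.dP_lincomb ..
  also have "\<dots> = lincomb (words m) X (\<lambda>w. chain_of_words m (d_word w))"
    unfolding lincomb_def
  proof (intro ext sum.cong refl)
    fix \<phi> w
    show "X w * dP obj_S Hom_S ud_S (Suc k) m (basis_vec (word_map w)) \<phi> = X w * chain_of_words m (d_word w) \<phi>"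
    proof (cases "X w = 0")
      case False
      then have "length w = m" "stars w = Suc k" using X by auto
      then show ?thesis by (simp add: dP_basis_vec_word_map)
    qed simp
  qed
  also have "\<dots> = chain_of_words m (lin_ext m d_word X)" by (simp add: chain_of_words_lin_ext)
  finally show ?thesis .
qed

definition word_of :: "nat \<Rightarrow> nat \<Rightarrow> (bool list \<Rightarrow> bool list) \<Rightarrow> bool option list" where
  "word_of n m \<phi> = (SOME w. length w = m \<and> stars w = n \<and> word_map w = \<phi>)"

lemma word_of_word_map: "length w = m \<Longrightarrow> stars w = n \<Longrightarrow> word_of n m (word_map w) = w"
proof -
  assume a: "length w = m" "stars w = n"
  have "length (word_of n m (word_map w)) = m \<and> stars (word_of n m (word_map w)) = n \<and>
      word_map (word_of n m (word_map w)) = word_map w"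
    unfolding word_of_def by (rule someI[of _ w]) (simp add: a)
  then show ?thesis using word_map_inj a by metis
qed

definition hb_S :: "nat \<Rightarrow> nat \<Rightarrow> (bool list \<Rightarrow> bool list) \<Rightarrow> (bool list \<Rightarrow> bool list) \<Rightarrow> 'k::field" where
  "hb_S n m \<phi> = chain_of_words m (h_word (word_of n m \<phi>))"

definition vertex_S :: "nat \<Rightarrow> bool list \<Rightarrow> bool list" where
  "vertex_S m = word_map (replicate m (Some False))"

lemma hb_S_in_Pmod: "\<phi> \<in> Hom_S n m \<Longrightarrow> hb_S n m \<phi> \<in> Pmod Hom_S (Suc n) m"
proof -
  assume "\<phi> \<in> Hom_S n m"
  then obtain w where w: "length w = m" "stars w = n" "\<phi> = word_map w" using Hom_S_iff_word_map by blast
  show ?thesis unfolding hb_S_def w(3) word_of_word_map[OF w(1,2)]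
    by (rule chain_of_words_in_Pmod) (use h_word_support w in auto)
qed

lemma hb_S_face: "length w = m \<Longrightarrow> stars w = Suc n \<Longrightarrow> 1 \<le> i \<Longrightarrow> i \<le> Suc n \<Longrightarrow>
    hb_S n m (compose (obj_S n) (word_map w) (coface_S (Suc n) i e)) =
    chain_of_words m (h_word (word_subst w (coface_word (Suc n) i e)))"
  by (simp add: hb_S_def word_map_comp_coface_S word_of_word_map stars_word_subst stars_coface_word
      length_coface_word)

lemma hb_S_homotopy:
  assumes n: "1 \<le> n" and \<phi>: "\<phi> \<in> Hom_S n m"
  shows "dP obj_S Hom_S ud_S (Suc n) m (hb_S n m \<phi>) + lincomb (Hom_S (n - 1) n) (ud_S n)
     (\<lambda>\<theta>. hb_S (n - 1) m (compose (obj_S (n - 1)) \<phi> \<theta>)) = (basis_vec \<phi> :: _ \<Rightarrow> 'k::field)"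
proof -
  obtain k where k: "n = Suc k" using n by (cases n) auto
  obtain w where w: "length w = m" "stars w = Suc k" "\<phi> = word_map w" using \<phi> k Hom_S_iff_word_map by blast
  let ?face = "\<lambda>i e. word_subst w (coface_word (Suc k) i e)"
  have dh: "dP obj_S Hom_S ud_S (Suc n) m (hb_S n m \<phi>) = (chain_of_words m (lin_ext m d_word (h_word w)) :: _ \<Rightarrow> 'k)"
    unfolding hb_S_def w(3) k word_of_word_map[OF w(1,2)]
    by (rule dP_chain_of_words) (use h_word_support w in auto)
  have "lincomb (Hom_S (n - 1) n) (ud_S n) (\<lambda>\<theta>. hb_S (n - 1) m (compose (obj_S (n - 1)) \<phi> \<theta>))
      = (\<lambda>x. \<Sum>i=1..Suc k. (-1) ^ (i - 1) *
          (chain_of_words m (h_word (?face i True)) x - chain_of_words m (h_word (?face i False)) x) :: 'k)"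
    unfolding k diff_Suc_1 lincomb_ud_S w(3) using w by (intro ext sum.cong refl) (simp add: hb_S_face)
  also have "\<dots> = chain_of_words m (lin_ext m h_word (d_word w))"
    unfolding d_word_def w(2) chain_of_words_def lin_ext_alternating_sum
    using w(1) by (intro ext sum.cong refl) (simp add: lin_ext_basis_vec)
  finally have hd: "lincomb (Hom_S (n - 1) n) (ud_S n) (\<lambda>\<theta>. hb_S (n - 1) m (compose (obj_S (n - 1)) \<phi> \<theta>))
      = (chain_of_words m (lin_ext m h_word (d_word w)) :: _ \<Rightarrow> 'k)" .
  have "lin_ext m d_word (h_word w) + lin_ext m h_word (d_word w) = (basis_vec w :: _ \<Rightarrow> 'k)"
    using d_word_h_word[of w] w by (simp add: vertex_part_def)
  then show ?thesis
    unfolding dh hd chain_of_words_def lin_ext_add[symmetric] using w by (simp add: lin_ext_basis_vec)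
qed

lemma hb_S_homotopy_0:
  assumes \<phi>: "\<phi> \<in> Hom_S 0 m"
  shows "dP obj_S Hom_S ud_S 1 m (hb_S 0 m \<phi>) = (basis_vec \<phi> - basis_vec (vertex_S m) :: _ \<Rightarrow> 'k::field)"
proof -
  obtain w where w: "length w = m" "stars w = 0" "\<phi> = word_map w" using \<phi> Hom_S_iff_word_map by blast
  have dh: "dP obj_S Hom_S ud_S (Suc 0) m (hb_S 0 m \<phi>) = (chain_of_words m (lin_ext m d_word (h_word w)) :: _ \<Rightarrow> 'k)"
    unfolding hb_S_def w(3) word_of_word_map[OF w(1,2)]
    by (rule dP_chain_of_words) (use h_word_support w in auto)
  have d0: "d_word w = (0 :: _ \<Rightarrow> 'k)" using w by (simp add: d_word_def zero_fun_def)
  have "lin_ext m d_word (h_word w) + lin_ext m h_word (d_word w) =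
      (basis_vec w - basis_vec (replicate m (Some False)) :: _ \<Rightarrow> 'k)"
    using d_word_h_word[of w] w by (simp add: vertex_part_def)
  then have "lin_ext m d_word (h_word w) = (basis_vec w - basis_vec (replicate m (Some False)) :: _ \<Rightarrow> 'k)"
    unfolding d0 lin_ext_zero by simp
  then show ?thesis
    using dh w by (simp add: chain_of_words_def lin_ext_diff lin_ext_basis_vec vertex_S_def)
qed

lemma contracting_homotopy_S:
  "contracting_homotopy obj_S Hom_S (ud_S :: nat \<Rightarrow> (bool list \<Rightarrow> bool list) \<Rightarrow> 'k::field) hb_S vertex_S"
proof (intro contracting_homotopy.intro contracting_homotopy_axioms.intro finite_hom_category_S)
  show "vertex_S m \<in> Hom_S 0 m" for m
    unfolding Hom_S_iff_word_map vertex_S_def by (intro exI[of _ "replicate m (Some False)"]) simp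
qed (fact ud_S_comp_ud_S sum_ud_S_1 hb_S_in_Pmod hb_S_homotopy hb_S_homotopy_0)+

theorem lemma3p1:
  shows "proj_resolution TYPE('x) TYPE('y) obj_D Hom_D (ud_D :: nat \<Rightarrow> (nat \<Rightarrow> nat) \<Rightarrow> 'k::field) \<and>
         proj_resolution TYPE('x) TYPE('y) obj_S Hom_S (ud_S :: nat \<Rightarrow> (bool list \<Rightarrow> bool list) \<Rightarrow> 'k)"
  using contracting_homotopy.proj_resolution[OF contracting_homotopy_D]
    contracting_homotopy.proj_resolution[OF contracting_homotopy_S] by blast

end
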